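(* Let $b\ge1$, let $\lambda^{(1)},\dots,\lambda^{(b)}$ be nonempty partitions of total size $n$, and let $k$ be a positive divisor of $n$. If $k$ divides $\gcd(|\lambda^{(1)}|,\dots,|\lambda^{(b)}|)$, then $$\mathrm{SYT}(\lambda^{(1)}\cup\cdots\cup\lambda^{(b)})^{\operatorname{pr}^{n/k}}=\Big\{I_{n/k,M_1}(T_1)\cup\cdots\cup I_{n/k,M_b}(T_b)\ :\ T_j\in\mathrm{SYT}(\lambda^{(j)})^{\operatorname{pr}^{|\lambda^{(j)}|/k}}\ (1\le j\le b),\ (M_1,\dots,M_b)\in\mathcal{P}\Big\},$$ where $\mathcal{P}$ is the set of ordered set partitions $(M_1,\dots,M_b)$ of $[n/k]$ into pairwise disjoint sets with $|M_j|=|\lambda^{(j)}|/k$. Otherwise, $\mathrm{SYT}(\lambda^{(1)}\cup\cdots\cup\lambda^{(b)})^{\operatorname{pr}^{n/k}}=\varnothing$.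
   Context: Tableaux in English notation. $\lambda^{(1)}\cup\cdots\cup\lambda^{(b)}$ is the skew shape formed by placing translates of the Young diagrams $\lambda^{(1)},\dots,\lambda^{(b)}$ block anti-diagonally, with $\lambda^{(j+1)}$ entirely strictly above and strictly to the right of $\lambda^{(j)}$ (no shared rows or columns); for fillings $U_j$ of the pieces, $U_1\cup\cdots\cup U_b$ denotes the corresponding filling of this skew shape. $\mathrm{SYT}(\cdot)$ is the set of standard tableaux of a shape; for a map $g$, $W^g$ is its fixed point set. Promotion $\operatorname{pr}$ on a standard (skew) tableau with $n$ cells: erase $1$, slide the empty cell by jeu de taquin (repeatedly move into it the smaller of its right and lower neighbours in the shape) until it reaches an outer corner of the shape, fill that corner with $n+1$, subtract $1$ from all entries. For a standard tableau $T$ of size $N$, a positive integer $m$, and $A=\{a_1<\cdots<a_q\}\subseteq[m]$ with $q\mid N$, $I_{m,A}(T)$ is obtained from $T$ by replacing each entry $iq+j$ (with $0\le i<N/q$, $1\le j\le q$) by $im+a_j$. *)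

theory Defs
  imports Main
begin

text \<open>Cells are pairs (row, column), English notation: rows grow downward,
columns grow to the right.  A filling (tableau) is a map from cells to nat,
with value 0 outside the shape.\<close>

type_synonym cell = "nat \<times> nat"
type_synonym tableau = "cell \<Rightarrow> nat"

definition is_partition :: "nat list \<Rightarrow> bool" where
  "is_partition lam \<longleftrightarrow> sorted_wrt (\<ge>) lam \<and> (\<forall>x\<in>set lam. 0 < x)"

definition psize :: "nat list \<Rightarrow> nat" where
  "psize lam = sum_list lam"

definition young :: "nat list \<Rightarrow> cell set" where
  "young lam = {(i, j). i < length lam \<and> j < lam ! i}"

definition SYT :: "cell set \<Rightarrow> tableau set" where
  "SYT S = {T. (\<forall>c. c \<notin> S \<longrightarrow> T c = 0)
              \<and> bij_betw T S {1..card S}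
              \<and> (\<forall>i j j'. (i, j) \<in> S \<and> (i, j') \<in> S \<and> j < j' \<longrightarrow> T (i, j) < T (i, j'))
              \<and> (\<forall>i i' j. (i, j) \<in> S \<and> (i', j) \<in> S \<and> i < i' \<longrightarrow> T (i, j) < T (i', j))}"

text \<open>One jeu de taquin move of the empty cell c (which carries value 0).\<close>
definition slide_step :: "cell set \<Rightarrow> tableau \<times> cell \<Rightarrow> tableau \<times> cell" where
  "slide_step S st = (let T = fst st; c = snd st;
      r = (fst c, Suc (snd c)); d = (Suc (fst c), snd c) in
      if r \<in> S \<and> (d \<notin> S \<or> T r < T d) then (T(c := T r, r := 0), r)
      else if d \<in> S then (T(c := T d, d := 0), d)
      else (T, c))"

text \<open>Promotion: erase 1, slide the empty cell to an outer corner (at most card S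
moves; further iterations are idle), fill it with n+1, subtract 1 everywhere.\<close>
definition promotion :: "cell set \<Rightarrow> tableau \<Rightarrow> tableau" where
  "promotion S T = (let c0 = (THE c. c \<in> S \<and> T c = 1);
      st = (slide_step S ^^ card S) (T(c0 := 0), c0);
      T' = fst st; c = snd st in
      (\<lambda>x. if x \<in> S then (if x = c then card S else T' x - 1) else 0))"

definition fixed_SYT :: "cell set \<Rightarrow> nat \<Rightarrow> tableau set" where
  "fixed_SYT S m = {T \<in> SYT S. (promotion S ^^ m) T = T}"

text \<open>I_{m,A}: entry i*q+j (1 \<le> j \<le> q) becomes i*m + a_j, q = |A|.\<close>
definition Iop :: "nat \<Rightarrow> nat set \<Rightarrow> tableau \<Rightarrow> tableau" where
  "Iop m A T = (\<lambda>x. if T x = 0 then 0 else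
      ((T x - 1) div card A) * m + sorted_list_of_set A ! ((T x - 1) mod card A))"

text \<open>Block anti-diagonal placement: piece j+1 lies strictly above and strictly to
the right of piece j (0-indexed pieces).\<close>
definition row_off :: "nat list list \<Rightarrow> nat \<Rightarrow> nat" where
  "row_off lams j = sum_list (map length (drop (Suc j) lams))"

definition col_off :: "nat list list \<Rightarrow> nat \<Rightarrow> nat" where
  "col_off lams j = sum_list (map hd (take j lams))"

definition piece :: "nat list list \<Rightarrow> nat \<Rightarrow> cell set" where
  "piece lams j = (\<lambda>(x, y). (x + row_off lams j, y + col_off lams j)) ` young (lams ! j)"

definition skew_shape :: "nat list list \<Rightarrow> cell set" where
  "skew_shape lams = (\<Union>j<length lams. piece lams j)"

definition skew_union :: "nat list list \<Rightarrow> (nat \<Rightarrow> tableau) \<Rightarrow> tableau" where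
  "skew_union lams U = (\<lambda>(x, y). \<Sum>j<length lams.
      if (x, y) \<in> piece lams j then U j (x - row_off lams j, y - col_off lams j) else 0)"

end

theory Submission
  imports Defs
begin

text \<open>A standard tableau of the block shape amounts to the sets A_j of entries in the blocks
  together with standard tableaux U_j of the blocks (the standardisations). Since the blocks
  share no rows or columns, the jeu de taquin slide of promotion stays inside the block holding 1;
  so promotion promotes that block and lowers every label by one, cyclically. After t promotions
  the label sets are rotated by t and block j has been promoted |A_j \<inter> [t]| times. Hence T is
  fixed by pr^m, m = n/k, iff each A_j is invariant under rotation by m, i.e. is the m-periodic
  extension of M_j = A_j \<inter> [m] (which forces |\<lambda>^(j)| = k |M_j|), and U_j is fixed by
  pr^|M_j|. Relabelling U_j by this periodic set is exactly I_{m,M_j}.\<close>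

section \<open>Sorted enumerations of finite sets of naturals\<close>

abbreviation enum :: "nat set \<Rightarrow> nat list" where
  "enum A \<equiv> sorted_list_of_set A"

lemma enum_eqI: "sorted_wrt (<) xs \<Longrightarrow> set xs = A \<Longrightarrow> enum A = xs"
  by (metis List.finite_set strict_sorted_equal strict_sorted_list_of_set set_sorted_list_of_set)

lemma enum_nth_mem: "finite A \<Longrightarrow> v < card A \<Longrightarrow> enum A ! v \<in> A"
  by (metis length_sorted_list_of_set nth_mem set_sorted_list_of_set)

lemma enum_nth_less: "finite A \<Longrightarrow> v < w \<Longrightarrow> w < card A \<Longrightarrow> enum A ! v < enum A ! w"
  using strict_sorted_list_of_set[of A] sorted_wrt_nth_less[of "(<)" "enum A" v w] by simp

lemma enum_nth_less_iff:
  "finite A \<Longrightarrow> v < card A \<Longrightarrow> w < card A \<Longrightarrow> enum A ! v < enum A ! w \<longleftrightarrow> v < w"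
  by (metis linorder_neqE_nat not_less_iff_gr_or_eq enum_nth_less)

lemma enum_nth_eq_iff:
  "finite A \<Longrightarrow> v < card A \<Longrightarrow> w < card A \<Longrightarrow> enum A ! v = enum A ! w \<longleftrightarrow> v = w"
  by (metis linorder_neqE_nat less_irrefl enum_nth_less)

definition enum_index :: "nat set \<Rightarrow> nat \<Rightarrow> nat" where
  "enum_index A a = (THE v. v < card A \<and> enum A ! v = a)"

lemma enum_index:
  assumes "finite A" "a \<in> A"
  shows "enum_index A a < card A" "enum A ! enum_index A a = a"
proof -
  obtain v where v: "v < card A" "enum A ! v = a"
    using assms by (metis in_set_conv_nth length_sorted_list_of_set set_sorted_list_of_set)
  have "\<exists>!v. v < card A \<and> enum A ! v = a" using v enum_nth_eq_iff[OF assms(1)] by metis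
  then have "enum_index A a < card A \<and> enum A ! enum_index A a = a"
    unfolding enum_index_def by (rule theI')
  then show "enum_index A a < card A" "enum A ! enum_index A a = a" by auto
qed

lemma image_enum_nth:
  assumes "finite A" shows "(\<lambda>v. enum A ! v) ` {..<card A} = A"
proof
  show "(\<lambda>v. enum A ! v) ` {..<card A} \<subseteq> A" using enum_nth_mem[OF assms] by auto
  show "A \<subseteq> (\<lambda>v. enum A ! v) ` {..<card A}" using enum_index[OF assms] by (metis image_eqI lessThan_iff subsetI)
qed

lemma enum_index_nth: "finite A \<Longrightarrow> v < card A \<Longrightarrow> enum_index A (enum A ! v) = v"
  using enum_index[of A "enum A ! v"] enum_nth_mem enum_nth_eq_iff by metis

lemma enum_index_less:
  "finite A \<Longrightarrow> a \<in> A \<Longrightarrow> a' \<in> A \<Longrightarrow> a < a' \<Longrightarrow> enum_index A a < enum_index A a'"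
  using enum_index[of A a] enum_index[of A a'] enum_nth_less_iff[of A "enum_index A a" "enum_index A a'"]
  by simp


section \<open>Jeu de taquin slides and promotion\<close>

definition level :: "cell \<Rightarrow> nat" where
  "level c = fst c + snd c"

lemma slide_step_idle_or_advances:
  "slide_step S st = st \<or> snd (slide_step S st) \<in> S \<and> level (snd (slide_step S st)) = Suc (level (snd st))"
  by (cases st) (auto simp: slide_step_def Let_def level_def)

lemma funpow_slide_step_stays_idle:
  assumes "slide_step S ((slide_step S ^^ s) st) = (slide_step S ^^ s) st" "s \<le> t"
  shows "(slide_step S ^^ t) st = (slide_step S ^^ s) st"
  using assms(2)
proof (induction t)
  case (Suc t)
  then show ?case using assms(1) by (cases "s = Suc t") (auto simp: le_Suc_eq)
qed simp

text \<open>While it moves, the empty cell stays in S and its level increases; so after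
  card S steps it has become idle.\<close>
lemma slide_step_idle_after_card:
  assumes "finite S" "snd st \<in> S" "card S \<le> t"
  shows "slide_step S ((slide_step S ^^ t) st) = (slide_step S ^^ t) st"
proof (rule ccontr)
  let ?c = "\<lambda>s. snd ((slide_step S ^^ s) st)"
  assume moving: "slide_step S ((slide_step S ^^ t) st) \<noteq> (slide_step S ^^ t) st"
  have "s \<le> t \<longrightarrow> ?c s \<in> S \<and> level (?c s) = level (snd st) + s" for s
  proof (induction s)
    case (Suc s)
    have "slide_step S ((slide_step S ^^ s) st) \<noteq> (slide_step S ^^ s) st" if "s \<le> t"
      using funpow_slide_step_stays_idle[of S s st t] that moving by auto
    then show ?case
      using slide_step_idle_or_advances[of S "(slide_step S ^^ s) st"] Suc.IH by auto
  qed (use assms(2) in simp)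
  then have "inj_on ?c {..t}" and "?c ` {..t} \<subseteq> S"
    by (auto intro!: inj_onI) (metis add_left_cancel)
  then have "card {..t} \<le> card S" using card_inj_on_le assms(1) by blast
  then show False using assms(3) by simp
qed

lemma funpow_slide_step_beyond_card:
  assumes "finite S" "snd st \<in> S" "card S \<le> t"
  shows "(slide_step S ^^ t) st = (slide_step S ^^ card S) st"
  using funpow_slide_step_stays_idle[OF slide_step_idle_after_card[OF assms(1,2) order_refl] assms(3)] .

definition labelling :: "cell set \<Rightarrow> tableau \<Rightarrow> bool" where
  "labelling S U \<longleftrightarrow> (\<forall>c. c \<notin> S \<longrightarrow> U c = 0) \<and> bij_betw U S {1..card S}"

lemma SYT_labelling: "U \<in> SYT S \<Longrightarrow> labelling S U"
  by (simp add: SYT_def labelling_def)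

lemma SYT_iff:
  "T \<in> SYT Z \<longleftrightarrow> labelling Z T
     \<and> (\<forall>i j j'. (i, j) \<in> Z \<and> (i, j') \<in> Z \<and> j < j' \<longrightarrow> T (i, j) < T (i, j'))
     \<and> (\<forall>i i' j. (i, j) \<in> Z \<and> (i', j) \<in> Z \<and> i < i' \<longrightarrow> T (i, j) < T (i', j))"
  by (simp add: SYT_def labelling_def)

lemma labelling_outside: "labelling S U \<Longrightarrow> c \<notin> S \<Longrightarrow> U c = 0"
  unfolding labelling_def by blast

lemma labelling_range: "labelling S U \<Longrightarrow> c \<in> S \<Longrightarrow> U c \<in> {1..card S}"
  unfolding labelling_def bij_betw_def by auto

lemma labelling_has_one:
  assumes "finite S" "S \<noteq> {}" "labelling S U"
  obtains c where "c \<in> S" "U c = 1"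
proof -
  have "1 \<in> U ` S"
    using assms card_gt_0_iff[of S] unfolding labelling_def bij_betw_def by auto
  then show ?thesis using that by (metis imageE)
qed

lemma the_labelled_one:
  assumes "labelling S U" "c \<in> S" "U c = 1"
  shows "(THE c. c \<in> S \<and> U c = 1) = c"
proof -
  have "inj_on U S" using assms(1) by (simp add: labelling_def bij_betw_def)
  then have "x = c" if "x \<in> S" "U x = 1" for x using that assms(2,3) by (metis inj_onD)
  then show ?thesis using assms(2,3) by blast
qed

definition slide_invariant :: "cell set \<Rightarrow> nat set \<Rightarrow> tableau \<times> cell \<Rightarrow> bool" where
  "slide_invariant S V st \<longleftrightarrow> snd st \<in> S \<and> fst st (snd st) = 0
     \<and> bij_betw (fst st) (S - {snd st}) V \<and> (\<forall>x. x \<notin> S \<longrightarrow> fst st x = 0)"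

lemma bij_betw_move_label:
  assumes "c \<in> S" "r \<in> S" "r \<noteq> c" "bij_betw T (S - {c}) V"
  shows "bij_betw (T(c := T r, r := 0)) (S - {r}) V"
proof -
  define sw where "sw x = (if x = c then r else if x = r then c else x)" for x
  have "bij_betw (T \<circ> sw) (S - {r}) V"
  proof (rule bij_betw_trans)
    show "bij_betw sw (S - {r}) (S - {c})"
      using assms(1-3) by (auto simp: bij_betw_def inj_on_def image_iff sw_def)
  qed (fact assms(4))
  then show ?thesis
    by (rule bij_betw_cong[THEN iffD1, rotated]) (auto simp: sw_def)
qed

lemma slide_invariant_step:
  assumes "slide_invariant S V st" "0 \<notin> V"
  shows "slide_invariant S V (slide_step S st)"
proof -
  obtain T i j where st: "st = (T, (i, j))" by (metis prod.exhaust)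
  show ?thesis
    using assms bij_betw_move_label[of "(i, j)" S "(i, Suc j)" T V]
      bij_betw_move_label[of "(i, j)" S "(Suc i, j)" T V]
    unfolding st slide_step_def Let_def slide_invariant_def by auto
qed

lemma slide_invariant_funpow:
  "slide_invariant S V st \<Longrightarrow> 0 \<notin> V \<Longrightarrow> slide_invariant S V ((slide_step S ^^ t) st)"
  by (induction t) (auto intro: slide_invariant_step)

lemma slide_invariant_start:
  assumes "labelling S U" "u \<in> S" "U u = 1"
  shows "slide_invariant S {2..card S} (U(u := 0), u)"
proof -
  have inj: "inj_on U S" and im: "U ` S = {1..card S}"
    using assms(1) by (auto simp: labelling_def bij_betw_def)
  have "U ` (S - {u}) = {1..card S} - {1}"
    using inj assms(2,3) im by (auto simp: inj_on_def)
  also have "\<dots> = {2..card S}" by auto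
  moreover have "inj_on (U(u := 0)) (S - {u})"
    using inj_on_subset[OF inj, of "S - {u}"] by (simp add: inj_on_def)
  ultimately have "bij_betw (U(u := 0)) (S - {u}) {2..card S}"
    by (simp add: bij_betw_def)
  then show ?thesis using assms by (auto simp: slide_invariant_def labelling_def)
qed

lemma labelling_after_slide:
  assumes "finite S" "slide_invariant S {2..card S} (T', cF)"
  shows "labelling S (\<lambda>x. if x \<in> S then (if x = cF then card S else T' x - 1) else 0)"
    (is "labelling S ?f")
proof -
  have cF: "cF \<in> S" and bij: "bij_betw T' (S - {cF}) {2..card S}"
    using assms(2) by (auto simp: slide_invariant_def)
  have "?f ` (S - {cF}) = (\<lambda>v. v - 1) ` T' ` (S - {cF})" by (auto simp: image_iff)
  also have "\<dots> = (\<lambda>v. v - 1) ` {2..card S}" using bij by (simp add: bij_betw_def)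
  also have "\<dots> = {1..card S - 1}"
  proof
    show "{1..card S - 1} \<subseteq> (\<lambda>v. v - 1) ` {2..card S}"
    proof
      fix v assume "v \<in> {1..card S - 1}"
      then show "v \<in> (\<lambda>v. v - 1) ` {2..card S}" by (intro image_eqI[of _ _ "v + 1"]) auto
    qed
  qed auto
  finally have rest: "?f ` (S - {cF}) = {1..card S - 1}" .
  have "?f ` S = insert (?f cF) (?f ` (S - {cF}))" using cF by blast
  also have "\<dots> = {1..card S}"
    using rest cF assms(1) card_gt_0_iff[of S] by auto
  finally have im: "?f ` S = {1..card S}" .
  then have "inj_on ?f S" using assms(1) by (intro eq_card_imp_inj_on) simp_all
  then show ?thesis using im by (simp add: labelling_def bij_betw_def)
qed

lemma promotion_eq:
  assumes "labelling S T" "c0 \<in> S" "T c0 = 1"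
    and "(slide_step S ^^ card S) (T(c0 := 0), c0) = (T', cF)"
  shows "promotion S T = (\<lambda>x. if x \<in> S then (if x = cF then card S else T' x - 1) else 0)"
  unfolding promotion_def Let_def the_labelled_one[OF assms(1-3)] assms(4) prod.sel ..

lemma labelling_promotion:
  assumes "finite S" "S \<noteq> {}" "labelling S U"
  shows "labelling S (promotion S U)"
proof -
  obtain u where u: "u \<in> S" "U u = 1" using labelling_has_one[OF assms] .
  obtain T' cF where slide: "(slide_step S ^^ card S) (U(u := 0), u) = (T', cF)"
    by (metis prod.exhaust)
  have "slide_invariant S {2..card S} (T', cF)"
    using slide_invariant_funpow[OF slide_invariant_start[OF assms(3) u], of "card S"] slide by simp
  then show ?thesis
    unfolding promotion_eq[OF assms(3) u slide] by (rule labelling_after_slide[OF assms(1)])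
qed


section \<open>Sliding inside an isolated translated copy\<close>

definition shift :: "nat \<Rightarrow> nat \<Rightarrow> cell \<Rightarrow> cell" where
  "shift a b = (\<lambda>(x, y). (x + a, y + b))"

lemma shift_simp [simp]: "shift a b (x, y) = (x + a, y + b)"
  by (simp add: shift_def)

lemma inj_shift: "inj (shift a b)"
  by (auto simp: inj_def shift_def)

lemma shift_eq_iff [simp]: "shift a b c = shift a b c' \<longleftrightarrow> c = c'"
  using inj_shift by (metis injD)

text \<open>A slide started in an isolated copy never leaves it.\<close>
definition isolated_copy :: "nat \<Rightarrow> nat \<Rightarrow> cell set \<Rightarrow> cell set \<Rightarrow> bool" where
  "isolated_copy a b Y S \<longleftrightarrow> (\<forall>x y. (x, y) \<in> Y \<longrightarrow>
      (shift a b (x, Suc y) \<in> S \<longleftrightarrow> (x, Suc y) \<in> Y) \<and> (shift a b (Suc x, y) \<in> S \<longleftrightarrow> (Suc x, y) \<in> Y))"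

definition slide_related ::
    "nat \<Rightarrow> nat \<Rightarrow> cell set \<Rightarrow> (nat \<Rightarrow> nat) \<Rightarrow> tableau \<Rightarrow> tableau \<times> cell \<Rightarrow> tableau \<times> cell \<Rightarrow> bool" where
  "slide_related a b Y f T0 st su \<longleftrightarrow> snd su \<in> Y \<and> snd st = shift a b (snd su)
     \<and> (\<forall>y\<in>Y. fst st (shift a b y) = f (fst su y)) \<and> (\<forall>x. x \<notin> shift a b ` Y \<longrightarrow> fst st x = T0 x)"

lemma slide_related_move:
  assumes "slide_related a b Y f T0 (T, shift a b u) (U, u)" "p \<in> Y" "p \<noteq> u" "f 0 = 0"
  shows "slide_related a b Y f T0
    (T(shift a b u := T (shift a b p), shift a b p := 0), shift a b p) (U(u := U p, p := 0), p)"
  using assms unfolding slide_related_def by auto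

definition slide_target :: "cell set \<Rightarrow> tableau \<Rightarrow> cell \<Rightarrow> cell option" where
  "slide_target S T c = (let r = (fst c, Suc (snd c)); d = (Suc (fst c), snd c) in
     if r \<in> S \<and> (d \<notin> S \<or> T r < T d) then Some r else if d \<in> S then Some d else None)"

lemma slide_step_eq_target:
  "slide_step S (T, c) =
    (case slide_target S T c of None \<Rightarrow> (T, c) | Some p \<Rightarrow> (T(c := T p, p := 0), p))"
  by (simp add: slide_step_def slide_target_def Let_def)

lemma slide_target_SomeD: "slide_target S T c = Some p \<Longrightarrow> p \<in> S \<and> p \<noteq> c"
  by (cases c) (auto simp: slide_target_def Let_def split: if_splits)

text \<open>Since f is strictly increasing, the comparison of the two neighbours of the empty cell
  comes out the same in S as in Y.\<close>
lemma slide_target_shift: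
  assumes iso: "isolated_copy a b Y S" and f: "strict_mono f" and u: "u \<in> Y"
    and TU: "\<And>y. y \<in> Y \<Longrightarrow> T (shift a b y) = f (U y)"
  shows "slide_target S T (shift a b u) = map_option (shift a b) (slide_target Y U u)"
proof -
  obtain i j where ij: "u = (i, j)" by (cases u)
  have "shift a b (i, Suc j) \<in> S \<longleftrightarrow> (i, Suc j) \<in> Y" "shift a b (Suc i, j) \<in> S \<longleftrightarrow> (Suc i, j) \<in> Y"
    using iso u by (simp_all add: isolated_copy_def ij)
  moreover have "(i, Suc j) \<in> Y \<Longrightarrow> (Suc i, j) \<in> Y \<Longrightarrow>
      T (shift a b (i, Suc j)) < T (shift a b (Suc i, j)) \<longleftrightarrow> U (i, Suc j) < U (Suc i, j)"
    using TU[of "(i, Suc j)"] TU[of "(Suc i, j)"] strict_mono_less[OF f] by simp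
  ultimately show ?thesis by (simp add: slide_target_def Let_def ij)
qed

lemma slide_step_related:
  assumes iso: "isolated_copy a b Y S" and f: "strict_mono f" "f 0 = 0"
    and rel: "slide_related a b Y f T0 st su"
  shows "slide_related a b Y f T0 (slide_step S st) (slide_step Y su)"
proof -
  obtain U u where su: "su = (U, u)" by (cases su)
  then obtain T where st: "st = (T, shift a b u)"
    using rel by (metis slide_related_def prod.collapse snd_conv)
  have rel': "slide_related a b Y f T0 (T, shift a b u) (U, u)" using rel st su by simp
  then have target: "slide_target S T (shift a b u) = map_option (shift a b) (slide_target Y U u)"
    by (intro slide_target_shift[OF iso f(1)]) (auto simp: slide_related_def)
  show ?thesis
  proof (cases "slide_target Y U u")
    case (Some p)
    then show ?thesis
      using slide_related_move[OF rel' _ _ f(2)] slide_target_SomeD[OF Some] target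
      by (simp add: st su slide_step_eq_target)
  qed (use rel target in \<open>simp add: st su slide_step_eq_target\<close>)
qed

lemma funpow_slide_step_related:
  assumes "isolated_copy a b Y S" "strict_mono f" "f 0 = 0" "slide_related a b Y f T0 st su"
  shows "slide_related a b Y f T0 ((slide_step S ^^ t) st) ((slide_step Y ^^ t) su)"
  by (induction t) (use assms slide_step_related in auto)


lemma full_slide_related:
  assumes S: "finite S" and Y: "finite Y" and copy: "shift a b ` Y \<subseteq> S"
    and iso: "isolated_copy a b Y S" and f: "strict_mono f" "f 0 = 0" and u0: "u0 \<in> Y"
    and TU: "\<And>y. y \<in> Y \<Longrightarrow> T (shift a b y) = f (U y)"
  shows "slide_related a b Y f (T(shift a b u0 := 0))
    ((slide_step S ^^ card S) (T(shift a b u0 := 0), shift a b u0)) ((slide_step Y ^^ card Y) (U(u0 := 0), u0))"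
proof -
  have "card Y = card (shift a b ` Y)"
    by (rule card_image[OF inj_on_subset[OF inj_shift subset_UNIV], symmetric])
  also have "\<dots> \<le> card S" by (rule card_mono[OF S copy])
  finally have "(slide_step Y ^^ card S) (U(u0 := 0), u0) = (slide_step Y ^^ card Y) (U(u0 := 0), u0)"
    by (intro funpow_slide_step_beyond_card[OF Y]) (simp_all add: u0)
  moreover have "slide_related a b Y f (T(shift a b u0 := 0))
      (T(shift a b u0 := 0), shift a b u0) (U(u0 := 0), u0)"
    using u0 TU f(2) by (auto simp: slide_related_def)
  from funpow_slide_step_related[OF iso f this, of "card S"] show ?thesis unfolding calculation .
qed

text \<open>Promoting T runs the whole slide inside the copy, where it mirrors the slide of U.\<close>
lemma promotion_isolated_copy:
  assumes S: "finite S" and Y: "finite Y" "Y \<noteq> {}" and copy: "shift a b ` Y \<subseteq> S"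
    and iso: "isolated_copy a b Y S" and T: "labelling S T" and U: "labelling Y U"
    and f: "strict_mono f" "f 0 = 0" "f 1 = 1" and TU: "\<And>y. y \<in> Y \<Longrightarrow> T (shift a b y) = f (U y)"
  shows "x \<in> S - shift a b ` Y \<Longrightarrow> promotion S T x = T x - 1"
    and "y \<in> Y \<Longrightarrow> promotion S T (shift a b y) =
      (if promotion Y U y = card Y then card S else f (Suc (promotion Y U y)) - 1)"
proof -
  obtain u0 where u0: "u0 \<in> Y" "U u0 = 1" using labelling_has_one[OF Y U] .
  define c0 where "c0 = shift a b u0"
  have c0: "c0 \<in> S" "T c0 = 1" using u0 copy TU f(3) by (auto simp: c0_def)
  obtain T' cF where slide_S: "(slide_step S ^^ card S) (T(c0 := 0), c0) = (T', cF)"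
    by (metis prod.exhaust)
  obtain U' uF where slide_Y: "(slide_step Y ^^ card Y) (U(u0 := 0), u0) = (U', uF)"
    by (metis prod.exhaust)
  have "slide_related a b Y f (T(c0 := 0)) (T', cF) (U', uF)"
    using full_slide_related[where T = T and U = U, OF S Y(1) copy iso f(1,2) u0(1) TU] slide_S slide_Y by (simp add: c0_def)
  then have uF: "uF \<in> Y" and cF: "cF = shift a b uF"
    and T'_copy: "\<And>y. y \<in> Y \<Longrightarrow> T' (shift a b y) = f (U' y)"
    and T'_outside: "\<And>x. x \<notin> shift a b ` Y \<Longrightarrow> T' x = (T(c0 := 0)) x"
    by (auto simp: slide_related_def)
  have "slide_invariant Y {2..card Y} (U', uF)"
    using slide_invariant_funpow[OF slide_invariant_start[OF U u0], of "card Y"] slide_Y by simp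
  then have U'_range: "\<And>y. y \<in> Y \<Longrightarrow> y \<noteq> uF \<Longrightarrow> U' y \<in> {2..card Y}"
    by (auto simp: slide_invariant_def bij_betw_def)
  note pr_S = promotion_eq[OF T c0 slide_S] and pr_Y = promotion_eq[OF U u0 slide_Y]
  show "promotion S T x = T x - 1" if "x \<in> S - shift a b ` Y"
    using that cF uF T'_outside c0_def u0(1) by (auto simp: pr_S)
  show "promotion S T (shift a b y) =
      (if promotion Y U y = card Y then card S else f (Suc (promotion Y U y)) - 1)" if y: "y \<in> Y"
  proof (cases "y = uF")
    case False
    then show ?thesis using y U'_range[OF y] copy cF T'_copy[OF y] by (auto simp: pr_S pr_Y)
  qed (use cF copy y in \<open>auto simp: pr_S pr_Y\<close>)
qed


section \<open>Relabelling, standardisation and cyclic shifts of labels\<close>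

definition relabel :: "nat set \<Rightarrow> tableau \<Rightarrow> tableau" where
  "relabel A U = (\<lambda>y. if U y = 0 then 0 else enum A ! (U y - 1))"

text \<open>Only strict monotonicity matters for the values beyond card A.\<close>
definition enum_ext :: "nat set \<Rightarrow> nat \<Rightarrow> nat" where
  "enum_ext A v = (if v = 0 then 0 else if v \<le> card A then enum A ! (v - 1) else Max (insert 0 A) + v)"

lemma enum_ext_0 [simp]: "enum_ext A 0 = 0"
  by (simp add: enum_ext_def)

lemma enum_ext_strict_mono:
  assumes "finite A" "0 \<notin> A"
  shows "strict_mono (enum_ext A)"
proof (rule strict_mono_Suc_iff[THEN iffD2], intro allI)
  fix v
  have le_max: "x \<in> A \<Longrightarrow> x \<le> Max (insert 0 A)" for x using assms(1) by simp
  consider "v = 0" | "0 < v" "Suc v \<le> card A" | "0 < v" "v = card A" | "card A < v"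
    by linarith
  then show "enum_ext A v < enum_ext A (Suc v)"
  proof cases
    case 1
    then show ?thesis
      using enum_nth_mem[OF assms(1), of 0] assms(2) by (cases "card A") (auto simp: enum_ext_def gr0I, metis gr0I)
  next
    case 2
    then show ?thesis using enum_nth_less[OF assms(1), of "v - 1" v] by (simp add: enum_ext_def)
  next
    case 3
    then show ?thesis
      using le_max[OF enum_nth_mem[OF assms(1), of "v - 1"]] by (simp add: enum_ext_def)
  qed (simp add: enum_ext_def)
qed

lemma enum_ext_1:
  assumes "finite A" "1 \<in> A" "0 \<notin> A"
  shows "enum_ext A 1 = 1"
proof -
  have "1 \<le> y" if "y \<in> A" for y using that assms(3) by (cases y) auto
  then have "Min A = 1" using assms(1,2) by (intro Min_eqI) auto
  moreover have "A \<noteq> {}" using assms(2) by blast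
  ultimately have "enum A ! 0 = 1" using sorted_list_of_set_nonempty[OF assms(1) \<open>A \<noteq> {}\<close>] by simp
  moreover have "0 < card A" using assms(1) \<open>A \<noteq> {}\<close> card_gt_0_iff by blast
  ultimately show ?thesis by (simp add: enum_ext_def)
qed

lemma relabel_eq_nth:
  assumes "labelling Y U" "y \<in> Y"
  shows "relabel A U y = enum A ! (U y - 1)"
  using labelling_range[OF assms] by (simp add: relabel_def)

lemma relabel_eq_enum_ext:
  assumes "labelling Y U" "y \<in> Y" "card A = card Y"
  shows "relabel A U y = enum_ext A (U y)"
  using labelling_range[OF assms(1,2)] assms(3) by (simp add: relabel_def enum_ext_def)

lemma relabel_image:
  assumes "labelling Y U" "finite A" "card A = card Y"
  shows "relabel A U ` Y = A"
proof -
  have "U ` Y = {1..card Y}" using assms(1) by (simp add: labelling_def bij_betw_def)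
  then have shifted: "(\<lambda>v. v - 1) ` U ` Y = {..<card A}"
    using assms(3) by (force simp: image_iff intro: bexI[where x = "Suc _"])
  have "relabel A U ` Y = (\<lambda>y. enum A ! (U y - 1)) ` Y"
    by (rule image_cong[OF refl relabel_eq_nth[OF assms(1)]])
  also have "\<dots> = (\<lambda>v. enum A ! v) ` (\<lambda>v. v - 1) ` U ` Y" by (simp add: image_image)
  finally show ?thesis using image_enum_nth[OF assms(2)] shifted by simp
qed

lemma relabel_less_iff:
  assumes "labelling Y U" "finite A" "card A = card Y" "y \<in> Y" "y' \<in> Y"
  shows "relabel A U y < relabel A U y' \<longleftrightarrow> U y < U y'"
proof -
  have r: "U y \<in> {1..card Y}" "U y' \<in> {1..card Y}"
    using labelling_range[OF assms(1)] assms(4,5) by auto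
  have "relabel A U y < relabel A U y' \<longleftrightarrow> U y - 1 < U y' - 1"
    unfolding relabel_eq_nth[OF assms(1,4)] relabel_eq_nth[OF assms(1,5)]
    by (rule enum_nth_less_iff[OF assms(2)]) (use r assms(3) in auto)
  then show ?thesis using r by auto
qed

lemma relabel_inj:
  assumes "labelling Y U" "labelling Y U'" "finite A" "card A = card Y"
    and "\<forall>y\<in>Y. relabel A U y = relabel A U' y"
  shows "U = U'"
proof
  fix y
  show "U y = U' y"
  proof (cases "y \<in> Y")
    case True
    have r: "U y \<in> {1..card Y}" "U' y \<in> {1..card Y}"
      using labelling_range[OF assms(1) True] labelling_range[OF assms(2) True] by auto
    have "enum A ! (U y - 1) = enum A ! (U' y - 1)"
      using assms(5) True by (simp add: relabel_eq_nth[OF assms(1)] relabel_eq_nth[OF assms(2)])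
    then have "U y - 1 = U' y - 1"
      using enum_nth_eq_iff[OF assms(3), of "U y - 1" "U' y - 1"] r assms(4) by auto
    then show ?thesis using r by auto
  qed (simp add: labelling_outside[OF assms(1)] labelling_outside[OF assms(2)])
qed

definition standardise :: "cell set \<Rightarrow> tableau \<Rightarrow> tableau" where
  "standardise Y g y = (if y \<in> Y then Suc (enum_index (g ` Y) (g y)) else 0)"

lemma labelling_standardise:
  assumes "finite Y" "inj_on g Y"
  shows "labelling Y (standardise Y g)"
proof -
  have fin: "finite (g ` Y)" and card: "card (g ` Y) = card Y"
    using assms by (simp_all add: card_image)
  have "standardise Y g ` Y = Suc ` enum_index (g ` Y) ` g ` Y"
    by (auto simp: standardise_def image_iff)
  also have "enum_index (g ` Y) ` g ` Y = {..<card Y}"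
  proof
    show "enum_index (g ` Y) ` g ` Y \<subseteq> {..<card Y}" using enum_index(1)[OF fin] card by auto
    show "{..<card Y} \<subseteq> enum_index (g ` Y) ` g ` Y"
      using enum_index_nth[OF fin] enum_nth_mem[OF fin] card by (metis image_eqI lessThan_iff subsetI)
  qed
  finally have im: "standardise Y g ` Y = {1..card Y}" by (simp only: image_Suc_lessThan)
  then have "inj_on (standardise Y g) Y" using assms(1) by (intro eq_card_imp_inj_on) simp_all
  then show ?thesis using im by (simp add: labelling_def bij_betw_def standardise_def)
qed

lemma relabel_standardise:
  assumes "finite Y" "y \<in> Y"
  shows "relabel (g ` Y) (standardise Y g) y = g y"
  using enum_index(2)[of "g ` Y" "g y"] assms by (simp add: relabel_def standardise_def)

lemma standardise_less_iff:
  assumes "finite Y" "y \<in> Y" "y' \<in> Y"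
  shows "standardise Y g y < standardise Y g y' \<longleftrightarrow> g y < g y'"
  using enum_index_less[of "g ` Y" "g y" "g y'"] enum_index_less[of "g ` Y" "g y'" "g y"] assms
  by (cases "g y = g y'") (auto simp: standardise_def linorder_neq_iff)

text \<open>For t \<le> n, the map a \<mapsto> a - t modulo n on {1..n}.\<close>
definition cyclic_shift :: "nat \<Rightarrow> nat \<Rightarrow> nat \<Rightarrow> nat" where
  "cyclic_shift n t a = (if t < a then a - t else a + n - t)"

lemma cyclic_shift_mem: "a \<in> {1..n} \<Longrightarrow> t \<le> n \<Longrightarrow> cyclic_shift n t a \<in> {1..n}"
  by (auto simp: cyclic_shift_def)

lemma inj_on_cyclic_shift: "t \<le> n \<Longrightarrow> inj_on (cyclic_shift n t) {1..n}"
  by (auto simp: inj_on_def cyclic_shift_def split: if_splits)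

lemma cyclic_shift_image: "t \<le> n \<Longrightarrow> cyclic_shift n t ` {1..n} = {1..n}"
  using cyclic_shift_mem card_image[OF inj_on_cyclic_shift]
  by (metis card_subset_eq finite_atLeastAtMost image_subsetI)

lemma cyclic_shift_0: "1 \<le> a \<Longrightarrow> cyclic_shift n 0 a = a"
  by (simp add: cyclic_shift_def)

lemma cyclic_shift_1_Suc:
  "a \<in> {1..n} \<Longrightarrow> t < n \<Longrightarrow> cyclic_shift n 1 (cyclic_shift n t a) = cyclic_shift n (Suc t) a"
  by (auto simp: cyclic_shift_def)

lemma cyclic_shift_eq_1_iff: "a \<in> {1..n} \<Longrightarrow> t < n \<Longrightarrow> cyclic_shift n t a = 1 \<longleftrightarrow> a = Suc t"
  by (auto simp: cyclic_shift_def)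

lemma one_mem_cyclic_shift_image_iff:
  assumes "A \<subseteq> {1..n}" "t < n"
  shows "1 \<in> cyclic_shift n t ` A \<longleftrightarrow> Suc t \<in> A"
proof
  assume "1 \<in> cyclic_shift n t ` A"
  then obtain a where "a \<in> A" "cyclic_shift n t a = 1" by auto
  then show "Suc t \<in> A" using cyclic_shift_eq_1_iff[OF _ assms(2)] assms(1) by auto
next
  assume "Suc t \<in> A"
  moreover have "cyclic_shift n t (Suc t) = 1" by (simp add: cyclic_shift_def)
  ultimately show "1 \<in> cyclic_shift n t ` A" by (metis image_eqI)
qed

lemma enum_cyclic_shift_1_mem:
  assumes "finite A" "A \<subseteq> {1..n}" "1 \<in> A"
  shows "enum (cyclic_shift n 1 ` A) = map (\<lambda>a. a - 1) (enum (A - {1})) @ [n]"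
proof (rule enum_eqI)
  have B: "2 \<le> a \<and> a \<le> n" if "a \<in> A" "a \<noteq> 1" for a using assms(2) that by force
  have "sorted_wrt (<) (map (\<lambda>a. a - 1) (enum (A - {1})))"
    unfolding sorted_wrt_map
    by (rule sorted_wrt_mono_rel[OF _ strict_sorted_list_of_set[of "A - {1}"]]) (use B assms(1) in auto)
  moreover have "\<forall>x\<in>set (map (\<lambda>a. a - 1) (enum (A - {1}))). x < n"
  proof
    fix x assume "x \<in> set (map (\<lambda>a. a - 1) (enum (A - {1})))"
    then obtain a where a: "a \<in> A - {1}" "x = a - 1" using assms(1) by auto
    then have "2 \<le> a" "a \<le> n" using B by auto
    then show "x < n" using a(2) by simp
  qed
  ultimately show "sorted_wrt (<) (map (\<lambda>a. a - 1) (enum (A - {1})) @ [n])"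
    by (simp add: sorted_wrt_append)
  show "set (map (\<lambda>a. a - 1) (enum (A - {1})) @ [n]) = cyclic_shift n 1 ` A"
  proof -
    have "cyclic_shift n 1 ` A = insert (cyclic_shift n 1 1) (cyclic_shift n 1 ` (A - {1}))"
      using assms(3) by blast
    also have "cyclic_shift n 1 ` (A - {1}) = (\<lambda>a. a - 1) ` (A - {1})"
      by (intro image_cong) (auto simp: cyclic_shift_def dest: B)
    finally show ?thesis using assms(1) by (simp add: cyclic_shift_def)
  qed
qed

lemma enum_cyclic_shift_1_not_mem:
  assumes "finite A" "A \<subseteq> {1..n}" "1 \<notin> A"
  shows "enum (cyclic_shift n 1 ` A) = map (\<lambda>a. a - 1) (enum A)"
proof (rule enum_eqI)
  have B: "2 \<le> a" if "a \<in> A" for a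
  proof -
    have "1 \<le> a" "a \<noteq> 1" using assms(2,3) that by auto
    then show ?thesis by simp
  qed
  show "sorted_wrt (<) (map (\<lambda>a. a - 1) (enum A))"
    unfolding sorted_wrt_map
    by (rule sorted_wrt_mono_rel[OF _ strict_sorted_list_of_set[of A]]) (use assms(1) in \<open>auto dest: B\<close>)
  have "cyclic_shift n 1 ` A = (\<lambda>a. a - 1) ` A"
    by (intro image_cong) (auto simp: cyclic_shift_def dest: B)
  then show "set (map (\<lambda>a. a - 1) (enum A)) = cyclic_shift n 1 ` A" using assms(1) by simp
qed

lemma relabel_cyclic_shift_1_not_mem:
  assumes "labelling Y U" "y \<in> Y" "finite A" "card A = card Y" "A \<subseteq> {1..n}" "1 \<notin> A"
  shows "relabel (cyclic_shift n 1 ` A) U y = relabel A U y - 1"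
proof -
  have "U y - 1 < length (enum A)" using labelling_range[OF assms(1,2)] assms(3,4) by auto
  then show ?thesis
    unfolding relabel_eq_nth[OF assms(1,2)] enum_cyclic_shift_1_not_mem[OF assms(3,5,6)] by simp
qed

lemma relabel_cyclic_shift_1_mem:
  assumes "labelling Y V" "y \<in> Y" "finite A" "card A = card Y" "A \<subseteq> {1..n}" "1 \<in> A"
  shows "relabel (cyclic_shift n 1 ` A) V y =
    (if V y = card A then n else enum_ext A (Suc (V y)) - 1)"
proof -
  have v: "V y \<in> {1..card A}" using labelling_range[OF assms(1,2)] assms(4) by simp
  have len: "length (enum (A - {1})) = card A - 1" using assms(3,6) by simp
  have enum_A: "enum A = 1 # enum (A - {1})"
  proof -
    have "Min A = 1" using assms(3,5,6) by (intro Min_eqI) auto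
    then show ?thesis using sorted_list_of_set_nonempty[OF assms(3)] assms(6) by auto
  qed
  show ?thesis
  proof (cases "V y = card A")
    case True
    then show ?thesis using len
      unfolding relabel_eq_nth[OF assms(1,2)] enum_cyclic_shift_1_mem[OF assms(3,5,6)]
      by (metis length_map nth_append_length)
  next
    case False
    then have "V y - 1 < card A - 1" "Suc (V y) \<le> card A" using v by auto
    moreover have "enum A ! V y = enum (A - {1}) ! (V y - 1)"
      using v by (simp add: enum_A nth_Cons')
    ultimately show ?thesis using len False
      unfolding relabel_eq_nth[OF assms(1,2)] enum_cyclic_shift_1_mem[OF assms(3,5,6)]
      by (simp add: nth_append enum_ext_def)
  qed
qed

lemma card_Int_atLeastAtMost_Suc:
  assumes "finite A"
  shows "card (A \<inter> {1..Suc t}) = (if Suc t \<in> A then Suc (card (A \<inter> {1..t})) else card (A \<inter> {1..t}))"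
proof -
  have "A \<inter> {1..Suc t} = (if Suc t \<in> A then insert (Suc t) (A \<inter> {1..t}) else A \<inter> {1..t})"
    by (auto simp: le_Suc_eq)
  then show ?thesis using assms by simp
qed

section \<open>Block skew shapes\<close>

lemma young_bound:
  assumes "is_partition lam" "(x, y) \<in> young lam"
  shows "x < length lam" "y < hd lam"
proof -
  show xl: "x < length lam" using assms(2) by (simp add: young_def)
  have yl: "y < lam ! x" using assms(2) by (simp add: young_def)
  have "lam ! x \<le> lam ! 0"
  proof (cases "x = 0")
    case False
    then show ?thesis using assms(1) xl sorted_wrt_nth_less[of "(\<ge>)" lam 0 x] by (simp add: is_partition_def)
  qed simp
  moreover have "lam \<noteq> []" using xl by auto
  ultimately show "y < hd lam" using yl by (simp add: hd_conv_nth)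
qed

lemma finite_young: "finite (young lam)"
proof -
  have "young lam = (SIGMA i:{..<length lam}. {..<lam ! i})" by (auto simp: young_def)
  then show ?thesis by simp
qed

lemma card_young: "card (young lam) = psize lam"
proof -
  have "young lam = (SIGMA i:{..<length lam}. {..<lam ! i})" by (auto simp: young_def)
  then have "card (young lam) = (\<Sum>i<length lam. lam ! i)" by simp
  also have "\<dots> = sum_list lam" by (simp add: sum_list_sum_nth atLeast0LessThan)
  finally show ?thesis by (simp add: psize_def)
qed

locale block_skew =
  fixes lams :: "nat list list"
  assumes partitions: "\<forall>lam\<in>set lams. is_partition lam \<and> psize lam > 0"
begin

abbreviation "b \<equiv> length lams"
abbreviation "Y j \<equiv> young (lams ! j)"
abbreviation "q j \<equiv> psize (lams ! j)"
abbreviation "ro j \<equiv> row_off lams j"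
abbreviation "co j \<equiv> col_off lams j"
abbreviation "\<tau> j \<equiv> shift (ro j) (co j)"
abbreviation "S \<equiv> skew_shape lams"

lemma partition_block: "j < b \<Longrightarrow> is_partition (lams ! j)"
  using partitions by simp

lemma q_pos: "j < b \<Longrightarrow> 0 < q j"
  using partitions by simp

lemma Y_nonempty: "j < b \<Longrightarrow> Y j \<noteq> {}"
  using q_pos card_young by (metis card.empty less_irrefl)

lemma piece_eq_image: "piece lams j = \<tau> j ` Y j"
  by (simp add: piece_def shift_def)

lemma row_off_Suc: assumes "Suc j < b" shows "ro j = length (lams ! Suc j) + ro (Suc j)"
proof -
  have "drop (Suc j) lams = lams ! Suc j # drop (Suc (Suc j)) lams"
    by (rule Cons_nth_drop_Suc[symmetric]) (use assms in simp)
  then show ?thesis unfolding row_off_def by simp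
qed

lemma row_off_mono: "i < j \<Longrightarrow> j < b \<Longrightarrow> ro j + length (lams ! j) \<le> ro i"
proof (induction j)
  case 0 then show ?case by simp
next
  case (Suc j)
  show ?case
  proof (cases "i = j")
    case True then show ?thesis using row_off_Suc[of j] Suc.prems by simp
  next
    case False
    then have "ro j + length (lams ! j) \<le> ro i" using Suc by simp
    moreover have "ro j = length (lams ! Suc j) + ro (Suc j)" using row_off_Suc Suc.prems by simp
    ultimately show ?thesis by simp
  qed
qed

lemma col_off_Suc: "j < b \<Longrightarrow> co (Suc j) = co j + hd (lams ! j)"
  unfolding col_off_def by (simp add: take_Suc_conv_app_nth)

lemma col_off_mono: "i < j \<Longrightarrow> j \<le> b \<Longrightarrow> co i + hd (lams ! i) \<le> co j"
proof (induction j)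
  case 0 then show ?case by simp
next
  case (Suc j)
  show ?case
  proof (cases "i = j")
    case True then show ?thesis using col_off_Suc[of j] Suc.prems by simp
  next
    case False
    then have "co i + hd (lams ! i) \<le> co j" using Suc by simp
    moreover have "co (Suc j) = co j + hd (lams ! j)" using col_off_Suc Suc.prems by simp
    ultimately show ?thesis by simp
  qed
qed

lemma piece_bounds:
  assumes "j < b" "(x, y) \<in> piece lams j"
  shows "ro j \<le> x" "x < ro j + length (lams ! j)" "co j \<le> y" "y < co j + hd (lams ! j)"
proof -
  obtain x' y' where c: "(x', y') \<in> Y j" "x = x' + ro j" "y = y' + co j"
    using assms(2) unfolding piece_eq_image by auto
  have "x' < length (lams ! j)" "y' < hd (lams ! j)"
    using young_bound[of "lams ! j" x' y'] partition_block[OF assms(1)] c(1) by auto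
  then show "ro j \<le> x" "x < ro j + length (lams ! j)" "co j \<le> y" "y < co j + hd (lams ! j)"
    using c by auto
qed

lemma piece_same_row:
  assumes "i < b" "j < b" "(x, y) \<in> piece lams i" "(x, y') \<in> piece lams j"
  shows "i = j"
proof (rule ccontr)
  assume "i \<noteq> j"
  then consider "i < j" | "j < i" by linarith
  then show False
  proof cases
    case 1 then show False using row_off_mono[of i j] assms piece_bounds[of i x y] piece_bounds[of j x y'] by linarith
  next
    case 2 then show False using row_off_mono[of j i] assms piece_bounds[of i x y] piece_bounds[of j x y'] by linarith
  qed
qed

lemma piece_same_col:
  assumes "i < b" "j < b" "(x, y) \<in> piece lams i" "(x', y) \<in> piece lams j"
  shows "i = j"
proof (rule ccontr)
  assume "i \<noteq> j"
  then consider "i < j" | "j < i" by linarith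
  then show False
  proof cases
    case 1 then show False using col_off_mono[of i j] assms piece_bounds[of i x y] piece_bounds[of j x' y] by linarith
  next
    case 2 then show False using col_off_mono[of j i] assms piece_bounds[of i x y] piece_bounds[of j x' y] by linarith
  qed
qed

lemma pieces_disjoint: "i < b \<Longrightarrow> j < b \<Longrightarrow> i \<noteq> j \<Longrightarrow> piece lams i \<inter> piece lams j = {}"
  using piece_same_row by fastforce

lemma skew_shape_eq: "S = (\<Union>j<b. piece lams j)" by (simp add: skew_shape_def)

lemma finite_skew_shape: "finite S" unfolding skew_shape_eq piece_eq_image using finite_young by auto

lemma card_piece: "card (piece lams j) = q j"
  unfolding piece_eq_image using card_image[OF inj_on_subset[OF inj_shift subset_UNIV]] card_young by simp

lemma card_skew_shape: "card S = (\<Sum>j<b. q j)"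
  unfolding skew_shape_eq
  by (subst card_UN_disjoint) (use pieces_disjoint finite_skew_shape card_piece finite_young piece_eq_image in auto)

lemma isolated_copy_piece:
  assumes "j < b"
  shows "isolated_copy (ro j) (co j) (Y j) S"
  unfolding isolated_copy_def shift_simp
proof (intro allI impI conjI)
  fix x y assume xy: "(x, y) \<in> Y j"
  have inP: "(x + ro j, y + co j) \<in> piece lams j" using xy unfolding piece_eq_image by force
  have inj: "\<tau> j c \<in> \<tau> j ` Y j \<longleftrightarrow> c \<in> Y j" for c
    by (rule inj_image_mem_iff[OF inj_shift])
  show "(x + ro j, Suc y + co j) \<in> S \<longleftrightarrow> (x, Suc y) \<in> Y j"
  proof
    assume "(x + ro j, Suc y + co j) \<in> S"
    then obtain i where i: "i < b" "(x + ro j, Suc y + co j) \<in> piece lams i" unfolding skew_shape_eq by auto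
    then have "i = j" using piece_same_row[OF i(1) assms i(2) inP] by simp
    then show "(x, Suc y) \<in> Y j" using i inj[of "(x, Suc y)"] unfolding piece_eq_image by simp
  next
    assume "(x, Suc y) \<in> Y j"
    then have "(x + ro j, Suc y + co j) \<in> piece lams j" unfolding piece_eq_image by force
    then show "(x + ro j, Suc y + co j) \<in> S" unfolding skew_shape_eq using assms by auto
  qed
  show "(Suc x + ro j, y + co j) \<in> S \<longleftrightarrow> (Suc x, y) \<in> Y j"
  proof
    assume "(Suc x + ro j, y + co j) \<in> S"
    then obtain i where i: "i < b" "(Suc x + ro j, y + co j) \<in> piece lams i" unfolding skew_shape_eq by auto
    then have "i = j" using piece_same_col[OF i(1) assms i(2) inP] by simp
    then show "(Suc x, y) \<in> Y j" using i inj[of "(Suc x, y)"] unfolding piece_eq_image by simp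
  next
    assume "(Suc x, y) \<in> Y j"
    then have "(Suc x + ro j, y + co j) \<in> piece lams j" unfolding piece_eq_image by force
    then show "(Suc x + ro j, y + co j) \<in> S" unfolding skew_shape_eq using assms by auto
  qed
qed

lemma skew_union_at:
  assumes "j < b" "y \<in> Y j"
  shows "skew_union lams U (\<tau> j y) = U j y"
proof -
  obtain x1 y1 where y: "y = (x1, y1)" by (cases y)
  have inP: "\<tau> j y \<in> piece lams j" using assms(2) unfolding piece_eq_image by blast
  let ?g = "\<lambda>i. if (x1 + ro j, y1 + co j) \<in> piece lams i
      then U i (x1 + ro j - row_off lams i, y1 + co j - col_off lams i) else 0"
  have "skew_union lams U (\<tau> j y) = sum ?g {..<b}"
    by (simp add: skew_union_def y)
  also have "\<dots> = ?g j + sum ?g ({..<b} - {j})" using assms(1) by (simp add: sum.remove)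
  also have "sum ?g ({..<b} - {j}) = 0"
    using pieces_disjoint[of _ j] inP assms(1) by (intro sum.neutral) (auto simp: y)
  finally show ?thesis using inP by (simp add: y)
qed

lemma skew_union_outside:
  assumes "x \<notin> S"
  shows "skew_union lams U x = 0"
  using assms unfolding skew_union_def skew_shape_eq by (cases x) (auto intro!: sum.neutral)

lemma skew_shape_cases:
  assumes "x \<in> S"
  obtains j y where "j < b" "y \<in> Y j" "x = \<tau> j y"
  using assms unfolding skew_shape_eq piece_eq_image by auto

lemma tau_mem_skew_shape: "j < b \<Longrightarrow> y \<in> Y j \<Longrightarrow> \<tau> j y \<in> S"
  unfolding skew_shape_eq piece_eq_image by blast

lemma tau_eq_tauD:
  "i < b \<Longrightarrow> j < b \<Longrightarrow> y \<in> Y i \<Longrightarrow> y' \<in> Y j \<Longrightarrow> \<tau> i y = \<tau> j y' \<Longrightarrow> i = j \<and> y = y'"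
  by (metis disjoint_iff image_eqI pieces_disjoint piece_eq_image shift_eq_iff)

lemma skew_union_cong:
  assumes "\<And>j y. j < b \<Longrightarrow> y \<in> Y j \<Longrightarrow> F j y = G j y"
  shows "skew_union lams F = skew_union lams G"
proof
  fix x show "skew_union lams F x = skew_union lams G x"
  proof (cases "x \<in> S")
    case True
    then obtain j y where "j < b" "y \<in> Y j" "x = \<tau> j y" by (rule skew_shape_cases)
    then show ?thesis using skew_union_at assms by simp
  qed (simp add: skew_union_outside)
qed

end


section \<open>Decomposing tableaux of a block skew shape\<close>

context block_skew
begin

definition decomposition :: "(nat \<Rightarrow> nat set) \<Rightarrow> (nat \<Rightarrow> tableau) \<Rightarrow> bool" where
  "decomposition A U \<longleftrightarrow> (\<forall>j<b. labelling (Y j) (U j) \<and> A j \<subseteq> {1..card S} \<and> card (A j) = q j)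
     \<and> (\<forall>i<b. \<forall>j<b. i \<noteq> j \<longrightarrow> A i \<inter> A j = {}) \<and> (\<Union>j<b. A j) = {1..card S}"

definition assemble :: "(nat \<Rightarrow> nat set) \<Rightarrow> (nat \<Rightarrow> tableau) \<Rightarrow> tableau" where
  "assemble A U = skew_union lams (\<lambda>j. relabel (A j) (U j))"

lemma decompositionD:
  assumes "decomposition A U" "j < b"
  shows "labelling (Y j) (U j)" "A j \<subseteq> {1..card S}" "card (A j) = card (Y j)" "finite (A j)"
  using assms finite_subset[of "A j" "{1..card S}"] card_young
  unfolding decomposition_def by auto

lemma decomposition_cong:
  assumes "\<And>j. j < b \<Longrightarrow> A j = A' j \<and> U j = U' j"
  shows "decomposition A U \<longleftrightarrow> decomposition A' U'"
proof -
  have "(\<Union>j<b. A j) = (\<Union>j<b. A' j)" using assms by auto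
  then show ?thesis unfolding decomposition_def using assms by auto
qed

lemma assemble_cong:
  assumes "\<And>j. j < b \<Longrightarrow> A j = A' j \<and> U j = U' j"
  shows "assemble A U = assemble A' U'"
  unfolding assemble_def by (rule skew_union_cong) (use assms in simp)

lemma assemble_tau: "j < b \<Longrightarrow> y \<in> Y j \<Longrightarrow> assemble A U (\<tau> j y) = relabel (A j) (U j) y"
  by (simp add: assemble_def skew_union_at)

lemma assemble_outside: "x \<notin> S \<Longrightarrow> assemble A U x = 0"
  by (simp add: assemble_def skew_union_outside)

lemma assemble_piece_image:
  assumes "decomposition A U" "j < b"
  shows "assemble A U ` piece lams j = A j"
proof -
  have "assemble A U ` piece lams j = relabel (A j) (U j) ` Y j"
    unfolding piece_eq_image image_image using assemble_tau[OF assms(2)] by (intro image_cong) simp_all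
  also have "\<dots> = A j" using relabel_image decompositionD[OF assms] by simp
  finally show ?thesis .
qed

lemma labelling_assemble:
  assumes "decomposition A U"
  shows "labelling S (assemble A U)"
proof -
  have im: "assemble A U ` S = {1..card S}"
    using assemble_piece_image[OF assms] assms
    unfolding skew_shape_eq image_UN decomposition_def by simp
  then have "inj_on (assemble A U) S" using finite_skew_shape by (intro eq_card_imp_inj_on) simp_all
  then show ?thesis using im assemble_outside unfolding labelling_def bij_betw_def by blast
qed

lemma assemble_less_iff:
  assumes "decomposition A U" "j < b" "y \<in> Y j" "y' \<in> Y j"
  shows "assemble A U (\<tau> j y) < assemble A U (\<tau> j y') \<longleftrightarrow> U j y < U j y'"
  using relabel_less_iff[OF decompositionD(1,4,3)[OF assms(1,2)] assms(3,4)]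
  by (simp add: assemble_tau assms(2-4))

lemma assemble_SYT:
  assumes "decomposition A U" "\<forall>j<b. U j \<in> SYT (Y j)"
  shows "assemble A U \<in> SYT S"
proof -
  have rows: "assemble A U (i, j1) < assemble A U (i, j2)"
    if h: "(i, j1) \<in> S" "(i, j2) \<in> S" "j1 < j2" for i j1 j2
  proof -
    obtain p x1 y1 where p: "p < b" "(x1, y1) \<in> Y p" "(i, j1) = \<tau> p (x1, y1)"
      using h(1) by (elim skew_shape_cases) (simp add: split_paired_all)
    obtain p' x2 y2 where p': "p' < b" "(x2, y2) \<in> Y p'" "(i, j2) = \<tau> p' (x2, y2)"
      using h(2) by (elim skew_shape_cases) (simp add: split_paired_all)
    have "p = p'" using piece_same_row p p' unfolding piece_eq_image by blast
    then show ?thesis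
      using p p' h(3) assms(2) assemble_less_iff[OF assms(1) p(1,2), of "(x2, y2)"]
      unfolding SYT_def by auto
  qed
  have cols: "assemble A U (i1, j) < assemble A U (i2, j)"
    if h: "(i1, j) \<in> S" "(i2, j) \<in> S" "i1 < i2" for i1 i2 j
  proof -
    obtain p x1 y1 where p: "p < b" "(x1, y1) \<in> Y p" "(i1, j) = \<tau> p (x1, y1)"
      using h(1) by (elim skew_shape_cases) (simp add: split_paired_all)
    obtain p' x2 y2 where p': "p' < b" "(x2, y2) \<in> Y p'" "(i2, j) = \<tau> p' (x2, y2)"
      using h(2) by (elim skew_shape_cases) (simp add: split_paired_all)
    have "p = p'" using piece_same_col p p' unfolding piece_eq_image by blast
    then show ?thesis
      using p p' h(3) assms(2) assemble_less_iff[OF assms(1) p(1,2), of "(x2, y2)"]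
      unfolding SYT_def by auto
  qed
  show ?thesis
    using labelling_assemble[OF assms(1)] rows cols unfolding SYT_def labelling_def by blast
qed

lemma assemble_inj:
  assumes "decomposition A U" "decomposition A' U'" "assemble A U = assemble A' U'" "j < b"
  shows "A j = A' j" "U j = U' j"
proof -
  show A: "A j = A' j"
    using assemble_piece_image[OF assms(1,4)] assemble_piece_image[OF assms(2,4)] assms(3) by simp
  have "relabel (A j) (U j) y = relabel (A j) (U' j) y" if "y \<in> Y j" for y
    using assms(3) assemble_tau[OF assms(4) that, of A U] assemble_tau[OF assms(4) that, of A' U'] A
    by simp
  then show "U j = U' j"
    using decompositionD[OF assms(1,4)] decompositionD[OF assms(2,4)]
    by (intro relabel_inj[of "Y j" _ _ "A j"]) simp_all
qed

lemma inj_on_block: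
  assumes "labelling S T" "j < b"
  shows "inj_on (T \<circ> \<tau> j) (Y j)"
proof -
  have "inj_on T (piece lams j)"
    using assms inj_on_subset[of T S] by (auto simp: labelling_def bij_betw_def skew_shape_eq)
  then show ?thesis using inj_shift by (intro comp_inj_on) (auto simp: piece_eq_image inj_on_def)
qed

lemma SYT_standardise_block:
  assumes T: "T \<in> SYT S" and j: "j < b"
  shows "standardise (Y j) (T \<circ> \<tau> j) \<in> SYT (Y j)"
proof -
  have "labelling (Y j) (standardise (Y j) (T \<circ> \<tau> j))"
    using labelling_standardise[OF finite_young inj_on_block[OF SYT_labelling[OF T] j]] .
  moreover have "(x + ro j, y + co j) \<in> S" if "(x, y) \<in> Y j" for x y
    using tau_mem_skew_shape[OF j that] by simp
  ultimately show ?thesis using T by (simp add: SYT_iff standardise_less_iff[OF finite_young])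
qed

lemma SYT_decomposition:
  assumes T: "T \<in> SYT S"
  obtains A U where "decomposition A U" "\<forall>j<b. U j \<in> SYT (Y j)" "T = assemble A U"
proof -
  have lab: "labelling S T" and inj: "inj_on T S" and im: "T ` S = {1..card S}"
    using T by (auto simp: SYT_iff labelling_def bij_betw_def)
  have sub: "piece lams j \<subseteq> S" if "j < b" for j using that by (auto simp: skew_shape_eq)
  define A where "A j = T ` piece lams j" for j
  define U where "U j = standardise (Y j) (T \<circ> \<tau> j)" for j
  have A_eq: "A j = (T \<circ> \<tau> j) ` Y j" for j by (simp add: A_def piece_eq_image image_comp)
  have dec: "decomposition A U"
    unfolding decomposition_def
  proof (intro conjI allI impI)
    fix j assume j: "j < b"
    show "labelling (Y j) (U j)" using SYT_labelling[OF SYT_standardise_block[OF T j]] by (simp add: U_def)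
    show "A j \<subseteq> {1..card S}" using sub[OF j] im by (auto simp: A_def)
    show "card (A j) = q j" using card_image[OF inj_on_block[OF lab j]] by (simp add: A_eq card_young)
  next
    fix i j assume "i < b" "j < b" "i \<noteq> j"
    then show "A i \<inter> A j = {}"
      using inj_on_image_Int[OF inj sub[of i] sub[of j]] pieces_disjoint[of i j] by (simp add: A_def)
  qed (use im in \<open>simp add: A_def skew_shape_eq flip: image_UN\<close>)
  moreover have "T = assemble A U"
  proof
    fix x
    show "T x = assemble A U x"
    proof (cases "x \<in> S")
      case True
      then obtain j y where j: "j < b" "y \<in> Y j" "x = \<tau> j y" by (rule skew_shape_cases)
      then show ?thesis
        unfolding j(3) assemble_tau[OF j(1,2)] A_eq U_def relabel_standardise[OF finite_young j(2)] by simp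
    qed (simp add: assemble_outside labelling_outside[OF lab])
  qed
  ultimately show ?thesis using that SYT_standardise_block[OF T] by (simp add: U_def)
qed

lemma block_of_one:
  assumes "decomposition A U" "0 < card S"
  obtains j0 where "j0 < b" "1 \<in> A j0" "\<And>j. j < b \<Longrightarrow> 1 \<in> A j \<longleftrightarrow> j = j0"
proof -
  have "1 \<in> (\<Union>j<b. A j)" using assms unfolding decomposition_def by simp
  then obtain j0 where j0: "j0 < b" "1 \<in> A j0" by blast
  then have "1 \<in> A j \<longleftrightarrow> j = j0" if "j < b" for j
    using assms(1) that unfolding decomposition_def by blast
  then show ?thesis using that j0 by blast
qed

lemma promotion_assemble:
  assumes dec: "decomposition A U" and S0: "0 < card S"
  shows "promotion S (assemble A U) = assemble (\<lambda>j. cyclic_shift (card S) 1 ` A j)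
      (\<lambda>j. if 1 \<in> A j then promotion (Y j) (U j) else U j)"
proof
  obtain j0 where j0: "j0 < b" "1 \<in> A j0" and one: "\<And>j. j < b \<Longrightarrow> 1 \<in> A j \<longleftrightarrow> j = j0"
    using block_of_one[OF dec S0] by blast
  note D0 = decompositionD[OF dec j0(1)]
  have "0 \<notin> A j0" using D0(2) by auto
  \<comment> \<open>On block j0, the tableau is the transport of U j0 by the strictly increasing enum_ext (A j0).\<close>
  note copy = promotion_isolated_copy[OF finite_skew_shape finite_young Y_nonempty[OF j0(1)] _
      isolated_copy_piece[OF j0(1)] labelling_assemble[OF dec] D0(1)
      enum_ext_strict_mono[OF D0(4) this] enum_ext_0 enum_ext_1[OF D0(4) j0(2) this]]
  have copy_sub: "\<tau> j0 ` Y j0 \<subseteq> S" using tau_mem_skew_shape[OF j0(1)] by blast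
  have on_copy: "assemble A U (\<tau> j0 y) = enum_ext (A j0) (U j0 y)" if "y \<in> Y j0" for y
    using relabel_eq_enum_ext[OF D0(1) that D0(3)] assemble_tau[OF j0(1) that] by simp
  fix x
  show "promotion S (assemble A U) x = assemble (\<lambda>j. cyclic_shift (card S) 1 ` A j)
      (\<lambda>j. if 1 \<in> A j then promotion (Y j) (U j) else U j) x"
  proof (cases "x \<in> S")
    case True
    then obtain j y where j: "j < b" "y \<in> Y j" "x = \<tau> j y" by (rule skew_shape_cases)
    note D = decompositionD[OF dec j(1)]
    show ?thesis
    proof (cases "j = j0")
      case True
      then have y: "y \<in> Y j0" and x: "x = \<tau> j0 y" using j by simp_all
      show ?thesis
        using copy(2)[OF copy_sub on_copy y] x j0 D0 relabel_cyclic_shift_1_mem[OF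
            labelling_promotion[OF finite_young Y_nonempty[OF j0(1)] D0(1)] y D0(4) D0(3) D0(2) j0(2)]
        by (simp add: assemble_tau[OF j0(1) y])
    next
      case False
      then have "x \<in> S - \<tau> j0 ` Y j0" using tau_eq_tauD[OF j(1) j0(1) j(2)] j True by force
      then show ?thesis
        using copy(1)[OF copy_sub on_copy] j False one[OF j(1)] D
          relabel_cyclic_shift_1_not_mem[OF D(1) j(2) D(4) D(3) D(2)]
        by (simp add: assemble_tau[OF j(1,2)])
    qed
  qed (simp add: promotion_def Let_def assemble_outside)
qed

lemma decomposition_promotion:
  assumes dec: "decomposition A U" and S0: "0 < card S"
  shows "decomposition (\<lambda>j. cyclic_shift (card S) 1 ` A j)
      (\<lambda>j. if 1 \<in> A j then promotion (Y j) (U j) else U j)"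
  unfolding decomposition_def
proof (intro conjI allI impI)
  fix j assume j: "j < b"
  note D = decompositionD[OF dec j]
  show "labelling (Y j) (if 1 \<in> A j then promotion (Y j) (U j) else U j)"
    using labelling_promotion[OF finite_young Y_nonempty[OF j] D(1)] D(1) by simp
  show "cyclic_shift (card S) 1 ` A j \<subseteq> {1..card S}" using D(2) cyclic_shift_mem S0 by auto
  show "card (cyclic_shift (card S) 1 ` A j) = q j"
    using card_image[OF inj_on_subset[OF inj_on_cyclic_shift[OF Suc_leI[OF S0]] D(2)]] D(3)
    by (simp add: card_young)
next
  fix i j assume ij: "i < b" "j < b" "i \<noteq> j"
  then show "cyclic_shift (card S) 1 ` A i \<inter> cyclic_shift (card S) 1 ` A j = {}"
    using dec inj_on_image_Int[OF inj_on_cyclic_shift[OF Suc_leI[OF S0]]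
        decompositionD(2)[OF dec ij(1)] decompositionD(2)[OF dec ij(2)]]
    unfolding decomposition_def by auto
next
  show "(\<Union>j<b. cyclic_shift (card S) 1 ` A j) = {1..card S}"
    using dec cyclic_shift_image[of 1 "card S"] S0 unfolding decomposition_def by (simp flip: image_UN)
qed

definition shifted_labels :: "nat \<Rightarrow> (nat \<Rightarrow> nat set) \<Rightarrow> nat \<Rightarrow> nat set" where
  "shifted_labels t A j = cyclic_shift (card S) t ` A j"

definition promoted_blocks :: "nat \<Rightarrow> (nat \<Rightarrow> nat set) \<Rightarrow> (nat \<Rightarrow> tableau) \<Rightarrow> nat \<Rightarrow> tableau" where
  "promoted_blocks t A U j = (promotion (Y j) ^^ card (A j \<inter> {1..t})) (U j)"

lemma funpow_promotion_assemble:
  assumes dec: "decomposition A U" and S0: "0 < card S" and t: "t \<le> card S"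
  shows "(promotion S ^^ t) (assemble A U) = assemble (shifted_labels t A) (promoted_blocks t A U)
    \<and> decomposition (shifted_labels t A) (promoted_blocks t A U)"
  using t
proof (induction t)
  case 0
  have "shifted_labels 0 A j = A j \<and> promoted_blocks 0 A U j = U j" if "j < b" for j
    using decompositionD(2)[OF dec that]
    by (force simp: shifted_labels_def promoted_blocks_def cyclic_shift_0 image_iff)
  then show ?case using assemble_cong decomposition_cong dec by (metis funpow_0)
next
  case (Suc t)
  then have t: "t < card S" by simp
  let ?A = "shifted_labels t A" and ?U = "promoted_blocks t A U"
  have IH: "(promotion S ^^ t) (assemble A U) = assemble ?A ?U" "decomposition ?A ?U"
    using Suc.IH t by auto
  have step: "cyclic_shift (card S) 1 ` ?A j = shifted_labels (Suc t) A j
      \<and> (if 1 \<in> ?A j then promotion (Y j) (?U j) else ?U j) = promoted_blocks (Suc t) A U j"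
    if j: "j < b" for j
  proof
    note D = decompositionD[OF dec j]
    show "cyclic_shift (card S) 1 ` ?A j = shifted_labels (Suc t) A j"
      unfolding shifted_labels_def image_image using cyclic_shift_1_Suc[OF _ t] D(2)
      by (intro image_cong) auto
    have "1 \<in> ?A j \<longleftrightarrow> Suc t \<in> A j"
      unfolding shifted_labels_def by (rule one_mem_cyclic_shift_image_iff[OF D(2) t])
    then show "(if 1 \<in> ?A j then promotion (Y j) (?U j) else ?U j) = promoted_blocks (Suc t) A U j"
      unfolding promoted_blocks_def card_Int_atLeastAtMost_Suc[OF D(4)] by simp
  qed
  show ?case
    using promotion_assemble[OF IH(2) S0] decomposition_promotion[OF IH(2) S0] IH(1)
      assemble_cong[OF step] decomposition_cong[OF step] by simp
qed

lemma funpow_promotion_assemble_fixed_iff: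
  assumes dec: "decomposition A U" and S0: "0 < card S" and m: "m \<le> card S"
  shows "(promotion S ^^ m) (assemble A U) = assemble A U \<longleftrightarrow>
    (\<forall>j<b. cyclic_shift (card S) m ` A j = A j \<and> (promotion (Y j) ^^ card (A j \<inter> {1..m})) (U j) = U j)"
proof -
  note iter = funpow_promotion_assemble[OF dec S0 m]
  have "(promotion S ^^ m) (assemble A U) = assemble A U \<longleftrightarrow>
      (\<forall>j<b. shifted_labels m A j = A j \<and> promoted_blocks m A U j = U j)"
    using iter assemble_inj[OF conjunct2[OF iter] dec] assemble_cong[of "shifted_labels m A" A] by metis
  then show ?thesis by (simp add: shifted_labels_def promoted_blocks_def)
qed

end

section \<open>Periodic label sets\<close>

definition periodic_ext :: "nat \<Rightarrow> nat \<Rightarrow> nat set \<Rightarrow> nat set" where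
  "periodic_ext k m M = (\<lambda>(i, a). i * m + a) ` ({..<k} \<times> M)"

lemma periodic_ext_iff:
  assumes "M \<subseteq> {1..m}" "0 < m"
  shows "x \<in> periodic_ext k m M \<longleftrightarrow> 1 \<le> x \<and> x \<le> k * m \<and> (x - 1) mod m + 1 \<in> M"
proof
  assume "x \<in> periodic_ext k m M"
  then obtain i a where ia: "i < k" "a \<in> M" "x = i * m + a" unfolding periodic_ext_def by auto
  have a: "1 \<le> a" "a \<le> m" using ia(2) assms(1) by auto
  obtain c where c: "a = Suc c" using a by (cases a) auto
  have "x - 1 = i * m + c" using ia(3) c by simp
  then have "(x - 1) mod m = c" using a c by simp
  then have "(x - 1) mod m = a - 1" using c by simp
  moreover have "x \<le> k * m"
  proof -
    have "i * m + a \<le> i * m + m" using a by simp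
    also have "\<dots> = Suc i * m" by simp
    also have "\<dots> \<le> k * m" using ia(1) by (intro mult_le_mono1) simp
    finally show ?thesis using ia(3) by simp
  qed
  ultimately show "1 \<le> x \<and> x \<le> k * m \<and> (x - 1) mod m + 1 \<in> M" using a ia by simp
next
  assume h: "1 \<le> x \<and> x \<le> k * m \<and> (x - 1) mod m + 1 \<in> M"
  define i where "i = (x - 1) div m"
  define a where "a = (x - 1) mod m + 1"
  have "x = Suc (x - 1)" using h by simp
  also have "x - 1 = i * m + (x - 1) mod m" unfolding i_def by simp
  finally have x: "x = i * m + a" by (simp add: a_def)
  have "x - 1 < k * m" using h by arith
  then have "i < k" unfolding i_def by (simp add: div_less_iff_less_mult assms(2))
  moreover have "a \<in> M" using h a_def by simp
  ultimately show "x \<in> periodic_ext k m M" unfolding periodic_ext_def using x by (intro image_eqI[of _ _ "(i, a)"]) auto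
qed

lemma periodic_ext_subset: "M \<subseteq> {1..m} \<Longrightarrow> 0 < m \<Longrightarrow> periodic_ext k m M \<subseteq> {1..k * m}"
  using periodic_ext_iff by auto

lemma cyclic_shift_periodic_ext:
  assumes "M \<subseteq> {1..m}" "0 < m" "0 < k"
  shows "cyclic_shift (k * m) m ` periodic_ext k m M = periodic_ext k m M"
proof -
  let ?n = "k * m"
  have mn: "m \<le> ?n" using assms(3) by simp
  have sub: "cyclic_shift ?n m ` periodic_ext k m M \<subseteq> periodic_ext k m M"
  proof
    fix y assume "y \<in> cyclic_shift ?n m ` periodic_ext k m M"
    then obtain x where x: "x \<in> periodic_ext k m M" "y = cyclic_shift ?n m x" by blast
    have xc: "1 \<le> x" "x \<le> ?n" "(x - 1) mod m + 1 \<in> M" using periodic_ext_iff[OF assms(1,2)] x(1) by auto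
    have yr: "y \<in> {1..?n}" using cyclic_shift_mem[of x ?n m] xc mn x(2) by simp
    have "(y - 1) mod m = (x - 1) mod m"
    proof (cases "m < x")
      case True
      then have "y = x - m" using x(2) by (simp add: cyclic_shift_def)
      then have "x - 1 = (y - 1) + m" using True by simp
      then show ?thesis by simp
    next
      case False
      then have "y = x + ?n - m" using x(2) by (simp add: cyclic_shift_def)
      then have "y - 1 = (x - 1) + (k - 1) * m" using xc mn assms(3)
        by (simp add: diff_mult_distrib)
      then show ?thesis by simp
    qed
    then show "y \<in> periodic_ext k m M" using periodic_ext_iff[OF assms(1,2)] yr xc by simp
  qed
  have "card (cyclic_shift ?n m ` periodic_ext k m M) = card (periodic_ext k m M)"
    using card_image[OF inj_on_subset[OF inj_on_cyclic_shift[OF mn] periodic_ext_subset[OF assms(1,2)]]] .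
  moreover have "finite (periodic_ext k m M)" using periodic_ext_subset[OF assms(1,2)] finite_subset by blast
  ultimately show ?thesis using sub card_subset_eq by metis
qed

lemma cyclic_shift_invariant_mem_iff:
  assumes "A \<subseteq> {1..k * m}" "0 < m" "0 < k" "cyclic_shift (k * m) m ` A = A" "x \<in> {1..k * m}"
  shows "x \<in> A \<longleftrightarrow> (x - 1) mod m + 1 \<in> A"
  using assms(5)
proof (induction x rule: less_induct)
  case (less x)
  show ?case
  proof (cases "m < x")
    case False
    then have "x - 1 < m" using less.prems by auto
    then have "(x - 1) mod m + 1 = x" using less.prems by simp
    then show ?thesis by simp
  next
    case True
    have inj: "inj_on (cyclic_shift (k * m) m) {1..k * m}"
      using inj_on_cyclic_shift assms(3) by simp
    have x_m: "x - m \<in> {1..k * m}" "x - m < x" using less.prems True assms(2) by auto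
    have mod: "(x - m - 1) mod m = (x - 1) mod m"
    proof -
      have "x - 1 = (x - m - 1) + m" using True by simp
      then show ?thesis by simp
    qed
    have "x \<in> A \<longleftrightarrow> cyclic_shift (k * m) m x \<in> A"
      using inj_on_image_mem_iff[OF inj less.prems assms(1)] assms(4) by simp
    also have "cyclic_shift (k * m) m x = x - m" using True by (simp add: cyclic_shift_def)
    also have "x - m \<in> A \<longleftrightarrow> (x - m - 1) mod m + 1 \<in> A" using less.IH[OF x_m(2,1)] .
    finally show ?thesis unfolding mod .
  qed
qed

lemma cyclic_shift_invariant_periodic:
  assumes "A \<subseteq> {1..k * m}" "0 < m" "0 < k" "cyclic_shift (k * m) m ` A = A"
  shows "A = periodic_ext k m (A \<inter> {1..m})"
proof -
  have "(x - 1) mod m + 1 \<in> {1..m}" for x using assms(2) by (simp add: Suc_leI)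
  then show ?thesis
    using cyclic_shift_invariant_mem_iff[OF assms] periodic_ext_iff[of "A \<inter> {1..m}" m _ k] assms(1,2)
    by auto
qed

definition periodic_enum :: "nat \<Rightarrow> nat set \<Rightarrow> nat \<Rightarrow> nat" where
  "periodic_enum m M v = v div card M * m + enum M ! (v mod card M)"

lemma strict_mono_periodic_enum:
  assumes M: "M \<subseteq> {1..m}" and M0: "0 < card M"
  shows "strict_mono (periodic_enum m M)"
proof (rule strict_monoI)
  fix v w :: nat assume "v < w"
  have fin: "finite M" using M finite_subset by blast
  have bound: "1 \<le> enum M ! (u mod card M) \<and> enum M ! (u mod card M) \<le> m" for u
    using enum_nth_mem[OF fin, of "u mod card M"] M M0 by auto
  show "periodic_enum m M v < periodic_enum m M w"
  proof (cases "v div card M < w div card M")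
    case True
    have "periodic_enum m M v \<le> Suc (v div card M) * m" using bound[of v] by (simp add: periodic_enum_def)
    also have "\<dots> \<le> w div card M * m" using True by (intro mult_le_mono1) simp
    also have "\<dots> < periodic_enum m M w" using bound[of w] by (simp add: periodic_enum_def)
    finally show ?thesis .
  next
    case False
    then have d: "v div card M = w div card M" using \<open>v < w\<close> div_le_mono[of v w "card M"] by simp
    then have "v mod card M < w mod card M" using \<open>v < w\<close> by (metis div_mult_mod_eq nat_add_left_cancel_less)
    then show ?thesis using d enum_nth_less[OF fin] M0 by (simp add: periodic_enum_def)
  qed
qed

lemma periodic_ext_eq_image:
  assumes M: "M \<subseteq> {1..m}"
  shows "periodic_ext k m M = periodic_enum m M ` {..<k * card M}"
proof -
  have fin: "finite M" using M finite_subset by blast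
  have "{..<k} \<times> M = map_prod id (\<lambda>u. enum M ! u) ` ({..<k} \<times> {..<card M})"
    by (rule map_prod_surj_on[symmetric]) (simp_all add: image_enum_nth[OF fin])
  then have "(\<lambda>(i, a). i * m + a) ` ({..<k} \<times> M) = (\<lambda>(i, u). i * m + enum M ! u) ` ({..<k} \<times> {..<card M})"
    by (simp add: image_image map_prod_def split_def)
  also have "{..<k} \<times> {..<card M} = (\<lambda>v. (v div card M, v mod card M)) ` {..<k * card M}"
  proof (cases "card M = 0")
    case False
    have "(i, u) \<in> (\<lambda>v. (v div card M, v mod card M)) ` {..<k * card M}" if "i < k" "u < card M" for i u
    proof (rule image_eqI)
      show "(i, u) = ((i * card M + u) div card M, (i * card M + u) mod card M)" using that by simp
      have "i * card M + u < Suc i * card M" using that by simp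
      also have "\<dots> \<le> k * card M" using that by (intro mult_le_mono1) simp
      finally show "i * card M + u \<in> {..<k * card M}" by simp
    qed
    moreover have "v div card M < k" if "v < k * card M" for v
      using that False by (simp add: div_less_iff_less_mult mult.commute)
    ultimately show ?thesis using False by auto
  qed simp
  finally show ?thesis by (simp add: periodic_ext_def image_image periodic_enum_def)
qed

lemma card_periodic_ext:
  assumes M: "M \<subseteq> {1..m}"
  shows "card (periodic_ext k m M) = k * card M"
proof (cases "card M = 0")
  case True
  then have "M = {}" using M finite_subset by fastforce
  then show ?thesis by (simp add: periodic_ext_def)
next
  case False
  then have "inj_on (periodic_enum m M) {..<k * card M}"
    using strict_mono_periodic_enum[OF M] strict_mono_imp_inj_on inj_on_subset by blast
  then show ?thesis by (simp add: periodic_ext_eq_image[OF M] card_image)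
qed

lemma enum_periodic_ext:
  assumes "M \<subseteq> {1..m}" "0 < card M"
  shows "enum (periodic_ext k m M) = map (periodic_enum m M) [0..<k * card M]"
proof (rule enum_eqI)
  show "sorted_wrt (<) (map (periodic_enum m M) [0..<k * card M])"
    unfolding sorted_wrt_map using strict_mono_periodic_enum[OF assms]
    by (intro sorted_wrt_mono_rel[OF _ sorted_wrt_upt]) (simp add: strict_mono_less)
qed (simp add: periodic_ext_eq_image[OF assms(1)] atLeast0LessThan)

lemma Iop_eq_relabel:
  assumes "M \<subseteq> {1..m}" "V y \<le> k * card M"
  shows "Iop m M V y = relabel (periodic_ext k m M) V y"
proof (cases "V y = 0")
  case False
  then have "0 < card M" "V y - 1 < k * card M" using assms(2) by (auto intro: gr0I)
  then show ?thesis
    using False enum_periodic_ext[OF assms(1)] by (simp add: Iop_def relabel_def periodic_enum_def)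
qed (simp add: Iop_def relabel_def)

lemma periodic_ext_Int: "M \<subseteq> {1..m} \<Longrightarrow> 0 < m \<Longrightarrow> 0 < k \<Longrightarrow> periodic_ext k m M \<inter> {1..m} = M"
proof -
  assume M: "M \<subseteq> {1..m}" and m: "0 < m" and k: "0 < k"
  have "x \<in> periodic_ext k m M \<longleftrightarrow> x \<in> M" if "x \<in> {1..m}" for x
  proof -
    have "x - 1 < m" using that by auto
    then have e: "(x - 1) mod m + 1 = x" using that by simp
    have mk: "m \<le> k * m" using k by simp
    have xk: "x \<le> k * m" using that mk by (meson atLeastAtMost_iff order_trans)
    show ?thesis using periodic_ext_iff[OF M m] that e xk by auto
  qed
  then show ?thesis using M by blast
qed

section \<open>Fixed points of powers of promotion\<close>

context block_skew
begin

definition admissible :: "nat \<Rightarrow> nat \<Rightarrow> (nat \<Rightarrow> tableau) \<Rightarrow> (nat \<Rightarrow> nat set) \<Rightarrow> bool" where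
  "admissible k m Ts Ms \<longleftrightarrow>
     (\<forall>j<b. Ts j \<in> fixed_SYT (Y j) (q j div k))
   \<and> (\<forall>j<b. Ms j \<subseteq> {1..m} \<and> card (Ms j) = q j div k)
   \<and> (\<forall>i<b. \<forall>j<b. i \<noteq> j \<longrightarrow> Ms i \<inter> Ms j = {})
   \<and> (\<Union>j<b. Ms j) = {1..m}"

lemma assemble_periodic_ext:
  assumes k: "0 < k" and blocks: "\<And>j. j < b \<Longrightarrow> k dvd q j \<and> labelling (Y j) (Ts j)
      \<and> Ms j \<subseteq> {1..m} \<and> card (Ms j) = q j div k"
  shows "assemble (\<lambda>j. periodic_ext k m (Ms j)) Ts = skew_union lams (\<lambda>j. Iop m (Ms j) (Ts j))"
  unfolding assemble_def
proof (rule skew_union_cong)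
  fix j y assume j: "j < b" and y: "y \<in> Y j"
  have q: "q j = k * (q j div k)" and "0 < q j div k" using blocks[OF j] q_pos[OF j] k by auto
  moreover have "Ts j y \<le> k * (q j div k)"
    using labelling_range[of "Y j" "Ts j" y] blocks[OF j] y q by (simp add: card_young)
  ultimately show "relabel (periodic_ext k m (Ms j)) (Ts j) y = Iop m (Ms j) (Ts j) y"
    using Iop_eq_relabel[of "Ms j" m "Ts j" y k] blocks[OF j] by simp
qed

lemma fixed_SYT_periodic_decomposition:
  assumes k: "0 < k" and card: "card S = k * m" and m: "0 < m" and T: "T \<in> fixed_SYT S m"
  obtains Ms U where "decomposition (\<lambda>j. periodic_ext k m (Ms j)) U"
    "T = assemble (\<lambda>j. periodic_ext k m (Ms j)) U"
    "\<And>j. j < b \<Longrightarrow> U j \<in> SYT (Y j) \<and> Ms j \<subseteq> {1..m} \<and> q j = k * card (Ms j)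
      \<and> (promotion (Y j) ^^ card (Ms j)) (U j) = U j"
proof -
  obtain A U where dec: "decomposition A U" "\<forall>j<b. U j \<in> SYT (Y j)" "T = assemble A U"
    using SYT_decomposition T unfolding fixed_SYT_def by blast
  define Ms where "Ms j = A j \<inter> {1..m}" for j
  have fixed: "cyclic_shift (card S) m ` A j = A j" "(promotion (Y j) ^^ card (Ms j)) (U j) = U j"
    if "j < b" for j
    using funpow_promotion_assemble_fixed_iff[OF dec(1)] T dec(3) card k m that
    by (simp_all add: fixed_SYT_def Ms_def)
  have A: "A j = periodic_ext k m (Ms j)" if "j < b" for j
    using decompositionD(2)[OF dec(1) that] fixed(1)[OF that] card k m
    unfolding Ms_def by (intro cyclic_shift_invariant_periodic) simp_all
  have Ms_sub: "Ms j \<subseteq> {1..m}" for j by (simp add: Ms_def)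
  have "q j = k * card (Ms j)" if "j < b" for j
    using decompositionD(3)[OF dec(1) that] A[OF that] card_periodic_ext[OF Ms_sub, of k]
    by (simp add: card_young)
  moreover have "decomposition (\<lambda>j. periodic_ext k m (Ms j)) U"
    using dec(1) A decomposition_cong by metis
  moreover have "T = assemble (\<lambda>j. periodic_ext k m (Ms j)) U"
    using dec(3) A assemble_cong by metis
  ultimately show ?thesis using that dec(2) fixed(2) Ms_sub by simp
qed

lemma fixed_SYT_dvd:
  assumes "0 < k" "card S = k * m" "0 < m" "T \<in> fixed_SYT S m" "j < b"
  shows "k dvd q j"
  using fixed_SYT_periodic_decomposition[OF assms(1-4)] assms(5) by (metis dvd_triv_left)

lemma fixed_SYT_subset:
  assumes k: "0 < k" and card: "card S = k * m" and m: "0 < m"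
  shows "fixed_SYT S m \<subseteq> {skew_union lams (\<lambda>j. Iop m (Ms j) (Ts j)) | Ts Ms. admissible k m Ts Ms}"
proof
  fix T assume T: "T \<in> fixed_SYT S m"
  obtain Ms U where dec: "decomposition (\<lambda>j. periodic_ext k m (Ms j)) U"
    and T_eq: "T = assemble (\<lambda>j. periodic_ext k m (Ms j)) U"
    and blocks: "\<And>j. j < b \<Longrightarrow> U j \<in> SYT (Y j) \<and> Ms j \<subseteq> {1..m} \<and> q j = k * card (Ms j)
      \<and> (promotion (Y j) ^^ card (Ms j)) (U j) = U j"
    using fixed_SYT_periodic_decomposition[OF k card m T] by blast
  have "admissible k m U Ms"
    unfolding admissible_def
  proof (intro conjI allI impI)
    fix i j assume ij: "i < b" "j < b" "i \<noteq> j"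
    have "Ms i = periodic_ext k m (Ms i) \<inter> {1..m}" "Ms j = periodic_ext k m (Ms j) \<inter> {1..m}"
      using periodic_ext_Int[OF _ m k] blocks ij by simp_all
    moreover have "periodic_ext k m (Ms i) \<inter> periodic_ext k m (Ms j) = {}"
      using dec ij unfolding decomposition_def by blast
    ultimately show "Ms i \<inter> Ms j = {}" by blast
  next
    have "(\<Union>j<b. Ms j) = (\<Union>j<b. periodic_ext k m (Ms j)) \<inter> {1..m}"
      using periodic_ext_Int[OF _ m k] blocks by auto
    then show "(\<Union>j<b. Ms j) = {1..m}" using dec card k unfolding decomposition_def by auto
  qed (use blocks k in \<open>simp_all add: fixed_SYT_def\<close>)
  moreover have "T = skew_union lams (\<lambda>j. Iop m (Ms j) (U j))"
    unfolding T_eq using blocks SYT_labelling k by (intro assemble_periodic_ext[OF k]) simp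
  ultimately show "T \<in> {skew_union lams (\<lambda>j. Iop m (Ms j) (Ts j)) | Ts Ms. admissible k m Ts Ms}"
    by blast
qed

lemma decomposition_periodic_ext:
  assumes card: "card S = k * m" and m: "0 < m" and dvd: "\<forall>j<b. k dvd q j"
    and adm: "admissible k m Ts Ms"
  shows "decomposition (\<lambda>j. periodic_ext k m (Ms j)) Ts"
proof -
  have Ms: "Ms j \<subseteq> {1..m}" "card (Ms j) = q j div k" if "j < b" for j
    using adm that unfolding admissible_def by auto
  show ?thesis
    unfolding decomposition_def
  proof (intro conjI allI impI)
    fix j assume j: "j < b"
    show "labelling (Y j) (Ts j)" using adm j by (simp add: admissible_def fixed_SYT_def SYT_labelling)
    show "periodic_ext k m (Ms j) \<subseteq> {1..card S}" unfolding card by (rule periodic_ext_subset[OF Ms(1)[OF j] m])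
    show "card (periodic_ext k m (Ms j)) = q j"
      using dvd j by (simp add: card_periodic_ext[OF Ms(1)[OF j]] Ms(2)[OF j])
  next
    fix i j assume ij: "i < b" "j < b" "i \<noteq> j"
    then have "Ms i \<inter> Ms j = {}" using adm unfolding admissible_def by blast
    then show "periodic_ext k m (Ms i) \<inter> periodic_ext k m (Ms j) = {}"
      using periodic_ext_iff[OF Ms(1)[OF ij(1)] m] periodic_ext_iff[OF Ms(1)[OF ij(2)] m] by blast
  next
    have "(\<Union>j<b. Ms j) = {1..m}" using adm unfolding admissible_def by blast
    then have "x \<in> (\<Union>j<b. periodic_ext k m (Ms j)) \<longleftrightarrow> x \<in> {1..k * m}" for x
      using periodic_ext_iff[OF Ms(1) m] m by (auto simp: Suc_le_eq)
    then show "(\<Union>j<b. periodic_ext k m (Ms j)) = {1..card S}" unfolding card by blast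
  qed
qed

lemma admissible_fixed_SYT:
  assumes k: "0 < k" and card: "card S = k * m" and m: "0 < m" and dvd: "\<forall>j<b. k dvd q j"
    and adm: "admissible k m Ts Ms"
  shows "skew_union lams (\<lambda>j. Iop m (Ms j) (Ts j)) \<in> fixed_SYT S m"
proof -
  let ?A = "\<lambda>j. periodic_ext k m (Ms j)"
  have Ts: "Ts j \<in> SYT (Y j)" "(promotion (Y j) ^^ (q j div k)) (Ts j) = Ts j"
    and Ms: "Ms j \<subseteq> {1..m}" "card (Ms j) = q j div k" if "j < b" for j
    using adm that unfolding admissible_def fixed_SYT_def by auto
  note dec = decomposition_periodic_ext[OF card m dvd adm]
  have "cyclic_shift (k * m) m ` ?A j = ?A j" "?A j \<inter> {1..m} = Ms j" if "j < b" for j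
    using cyclic_shift_periodic_ext periodic_ext_Int Ms(1)[OF that] m k by simp_all
  then have "(promotion S ^^ m) (assemble ?A Ts) = assemble ?A Ts"
    using funpow_promotion_assemble_fixed_iff[OF dec] card k m Ts(2) Ms(2) by simp
  moreover have "assemble ?A Ts = skew_union lams (\<lambda>j. Iop m (Ms j) (Ts j))"
    using dvd Ts(1) Ms by (intro assemble_periodic_ext[OF k]) (simp add: SYT_labelling)
  ultimately show ?thesis using assemble_SYT[OF dec] Ts(1) by (simp add: fixed_SYT_def)
qed

theorem fixed_SYT_eq:
  assumes "0 < k" "card S = k * m" "0 < m" "\<forall>j<b. k dvd q j"
  shows "fixed_SYT S m = {skew_union lams (\<lambda>j. Iop m (Ms j) (Ts j)) | Ts Ms. admissible k m Ts Ms}"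
  using fixed_SYT_subset[OF assms(1-3)] admissible_fixed_SYT[OF assms] by blast

end

theorem mainTheorem16:
  fixes lams :: "nat list list" and n k :: nat
  assumes "lams \<noteq> []"
    and "\<forall>lam\<in>set lams. is_partition lam \<and> psize lam > 0"
    and "n = (\<Sum>j<length lams. psize (lams ! j))"
    and "0 < k" and "k dvd n"
  shows "(k dvd Gcd (psize ` set lams) \<longrightarrow>
           fixed_SYT (skew_shape lams) (n div k) =
             {skew_union lams (\<lambda>j. Iop (n div k) (Ms j) (Ts j)) | Ts Ms.
                (\<forall>j<length lams. Ts j \<in> fixed_SYT (young (lams ! j)) (psize (lams ! j) div k))
              \<and> (\<forall>j<length lams. Ms j \<subseteq> {1..n div k} \<and> card (Ms j) = psize (lams ! j) div k)
              \<and> (\<forall>i<length lams. \<forall>j<length lams. i \<noteq> j \<longrightarrow> Ms i \<inter> Ms j = {})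
              \<and> (\<Union>j<length lams. Ms j) = {1..n div k}})
       \<and> (\<not> k dvd Gcd (psize ` set lams) \<longrightarrow> fixed_SYT (skew_shape lams) (n div k) = {})"
proof -
  interpret block_skew lams using assms(2) by unfold_locales
  have card: "card S = k * (n div k)" using card_skew_shape assms(3,5) by simp
  have "q 0 \<le> n" unfolding assms(3) using assms(1) by (intro member_le_sum) auto
  then have "0 < n" using q_pos[of 0] assms(1) by simp
  then have m: "0 < n div k" using assms(4,5) by auto
  have gcd: "k dvd Gcd (psize ` set lams) \<longleftrightarrow> (\<forall>j<length lams. k dvd psize (lams ! j))"
    by (simp add: dvd_Gcd_iff all_set_conv_all_nth)
  show ?thesis
  proof (intro conjI impI)
    assume "k dvd Gcd (psize ` set lams)"
    then show "fixed_SYT S (n div k) = {skew_union lams (\<lambda>j. Iop (n div k) (Ms j) (Ts j)) | Ts Ms.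
        (\<forall>j<b. Ts j \<in> fixed_SYT (Y j) (q j div k))
      \<and> (\<forall>j<b. Ms j \<subseteq> {1..n div k} \<and> card (Ms j) = q j div k)
      \<and> (\<forall>i<b. \<forall>j<b. i \<noteq> j \<longrightarrow> Ms i \<inter> Ms j = {}) \<and> (\<Union>j<b. Ms j) = {1..n div k}}"
      using fixed_SYT_eq[OF assms(4) card m] gcd unfolding admissible_def by simp
  next
    assume "\<not> k dvd Gcd (psize ` set lams)"
    then show "fixed_SYT S (n div k) = {}" using fixed_SYT_dvd[OF assms(4) card m] gcd by blast
  qed
qed

end
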